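(* Consider the nonlinear system $\dot{x}=f(x,u)$, $y=h(x,u)$, $x(0)=x^0$, with state $x(t)\in\mathbb{R}^n$, input $u(t)\in U\subset\mathbb{R}^m$, output $y(t)\in\mathbb{R}^p$, and $f,h$ of class $C^2$. Suppose: (i) the system is uniformly observable for any input, i.e. there exist coordinates $\{x_{ij}: i=1,\dots,p,\ j=1,\dots,l_i\}$ with $1\le l_1\le\dots\le l_p$, $\sum_i l_i=n$, in which the system takes the observable form $y_i=x_{i1}+h_i(u)$, $\dot{x}_{ij}=x_{i,j+1}+f_{ij}(\underline{x}_j,u)$ for $j<l_i$, $\dot{x}_{il_i}=f_{il_i}(\underline{x}_{l_i},u)$, where $\underline{x}_j=(x_{11},\dots,x_{1,\min\{j,l_1\}},x_{21},\dots,x_{pj})$ (indices $i=1,\dots,p$, $k=1,\dots,\min\{j,l_i\}$). Equivalently $\dot{x}=\bar{A}x+\bar{f}(x,u)$, $y=\bar{C}x+\bar{h}(u)$, where $\bar{A}$ is block diagonal with $l_i\times l_i$ shift blocks (ones on the superdiagonal, zeros elsewhere), $\bar{C}$ is block diagonal with $1\times l_i$ blocks $[1\ 0\ \cdots\ 0]$, $\bar{f}$ stacks the $f_{ij}$ and $\bar{h}$ stacks the $h_i$. Without loss of generality the system is in this form, and there is $L$ such that for all $x,\xi\in\mathbb{R}^n$, $u\in U$: $|f_{i}(\underline{x}_j,u)-f_{i}(\underline{\xi}_j,u)|\le L|\underline{x}_j-\underline{\xi}_j|$ ($|\cdot|$ the Euclidean norm); (ii) the second derivative of $\bar{f}$ is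 bounded: $\left|\frac{\partial^2\bar{f}}{\partial x_i\partial x_j}(x,u)\xi_i\xi_j\right|\le L|\xi|^2$ for all $x,\xi\in\mathbb{R}^n$, $u\in U$ (summation over repeated indices); (iii) $x(t),y(t)$ are any state and output trajectories generated by $\dot{x}=\bar{A}x+\bar{f}(x,u)$, $y=\bar{C}x+\bar{h}(u)$; (iv) the $n\times n$ design matrix $G$ is invertible, and $\Gamma=GG'$; (v) $\hat{x}(t),P(t)$ solve the extended Kalman filter $\dot{\hat{x}}=f(\hat{x},u)+PC'(y-h(\hat{x},u))$, $\dot{P}=AP+PA'+\Gamma-PC'CP$, $\hat{x}(0)=\hat{x}^0$, $P(0)=P^0$, with $A(t)=\frac{\partial f}{\partial x}(\hat{x}(t),u(t))$, $C(t)=\frac{\partial h}{\partial x}(\hat{x}(t),u(t))$, where $P(0)$ is positive definite and $\tilde{x}(0)=x(0)-\hat{x}(0)$ is sufficiently small. Then $|x(t)-\hat{x}(t)|\to 0$ exponentially as $t\to\infty$.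
   Context: Local convergence of the extended Kalman filter for nonlinear systems that are uniformly observable for any input, $C^2$, Lipschitz in observable form, and with bounded second partial derivatives. *)

theory Defs
  imports "HOL-Analysis.Analysis"
begin

text \<open>Coordinates of the observable form. The state index type 'n is in bijection with
  the pairs (i,j), i an output index, 1 \<le> j \<le> l i, via k \<mapsto> (blk k, pos k).\<close>
definition obs_coords :: "('p::{finite,linorder} \<Rightarrow> nat) \<Rightarrow> ('n::finite \<Rightarrow> 'p) \<Rightarrow> ('n \<Rightarrow> nat) \<Rightarrow> bool" where
  "obs_coords l blk pos \<longleftrightarrow> (\<forall>i. 1 \<le> l i) \<and> mono l \<and>
     bij_betw (\<lambda>k. (blk k, pos k)) UNIV {(i, j). 1 \<le> j \<and> j \<le> l i}"

definition Abar :: "('n::finite \<Rightarrow> 'p) \<Rightarrow> ('n \<Rightarrow> nat) \<Rightarrow> real^'n^'n" where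
  "Abar blk pos = (\<chi> k k'. if blk k = blk k' \<and> pos k' = pos k + 1 then 1 else 0)"

definition Cbar :: "('n::finite \<Rightarrow> 'p::finite) \<Rightarrow> ('n \<Rightarrow> nat) \<Rightarrow> real^'n^'p" where
  "Cbar blk pos = (\<chi> i k. if blk k = i \<and> pos k = 1 then 1 else 0)"

definition sub_dist :: "('n::finite \<Rightarrow> nat) \<Rightarrow> nat \<Rightarrow> real^'n \<Rightarrow> real^'n \<Rightarrow> real" where
  "sub_dist pos j x \<xi> = sqrt (\<Sum>k'\<in>{k'. pos k' \<le> j}. (x $ k' - \<xi> $ k')\<^sup>2)"

definition has_C2_derivs :: "'a::real_normed_vector set \<Rightarrow> ('a \<Rightarrow> 'b::real_normed_vector)
    \<Rightarrow> ('a \<Rightarrow> 'a \<Rightarrow>\<^sub>L 'b) \<Rightarrow> ('a \<Rightarrow> 'a \<Rightarrow>\<^sub>L 'a \<Rightarrow>\<^sub>L 'b) \<Rightarrow> bool" where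
  "has_C2_derivs S g D1 D2 \<longleftrightarrow>
     (\<forall>z\<in>S. (g has_derivative blinfun_apply (D1 z)) (at z within S) \<and>
             (D1 has_derivative blinfun_apply (D2 z)) (at z within S)) \<and> continuous_on S D2"

definition C2_on :: "'a::real_normed_vector set \<Rightarrow> ('a \<Rightarrow> 'b::real_normed_vector) \<Rightarrow> bool" where
  "C2_on S g \<longleftrightarrow> (\<exists>D1 D2. has_C2_derivs S g D1 D2)"

definition pos_def_mat :: "real^'n^'n \<Rightarrow> bool" where
  "pos_def_mat M \<longleftrightarrow> transpose M = M \<and> (\<forall>v. v \<noteq> 0 \<longrightarrow> 0 < v \<bullet> (M *v v))"

end

theory Submission
  imports Defs
begin

text \<open>Write Q = P^-1 and e = x - xh. In observable coordinates the Jacobian of f is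
  Abar + Phi with Phi lower triangular and bounded in terms of L, and that of h is the constant
  Cbar. The proof rests on two-sided bounds for P, obtained by comparison at the first time a
  bound would fail, i.e. on a kernel vector v of the difference:

  \<^item> P stays above delta I, because there the Riccati equation gives
    v' (dP/dt) v >= (gamma - delta (2 alpha + beta)) |v|^2 > 0, where Gamma = G G' >= gamma I.
  \<^item> Q stays above sigma S for a fixed positive definite S with
    S (Abar + Phi) + (Abar + Phi)' S <= 2 K Cbar' Cbar - I for every admissible Phi, built with
    weights R^((T - i)^2) along the blocks. Since
    dQ/dt = - Q A - A' Q - Q Gamma Q + Cbar' Cbar, there
    v' (dQ/dt) v >= (1 - 2 sigma K) |Cbar v|^2 + sigma |v|^2 - sigma^2 |Gamma| |S|^2 |v|^2 > 0.

  Then V = e' Q e is comparable to |e|^2 and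
  dV/dt = 2 (Q e)' r - |Cbar e|^2 - (Q e)' Gamma (Q e) with a quadratic remainder r, so V decays
  exponentially as long as it is small, and small initial errors keep it small.\<close>

section \<open>Frobenius norm of matrices\<close>

lemma norm_vec_power2: "(norm (x::real^'n))\<^sup>2 = (\<Sum>i\<in>UNIV. (x$i)\<^sup>2)"
  by (simp add: norm_vec_def L2_set_def sum_nonneg)

lemma norm_matrix_power2: "(norm (X::real^'n^'m))\<^sup>2 = (\<Sum>i\<in>UNIV. (norm (X$i))\<^sup>2)"
  by (simp add: norm_vec_def L2_set_def sum_nonneg)

lemma sum_norm_column_power2: "(\<Sum>j\<in>UNIV. (norm (column j (Y::real^'p^'n)))\<^sup>2) = (norm Y)\<^sup>2"
  by (simp add: norm_matrix_power2 norm_vec_power2 column_def sum.swap[of _ "UNIV::'p set"])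

lemma matrix_vector_mult_component_inner: "(X *v v) $ i = X$i \<bullet> (v::real^'n)"
  by (simp add: matrix_vector_mult_def inner_vec_def mult.commute)

lemma matrix_mult_component_inner: "(X ** Y) $ i $ j = X$i \<bullet> column j (Y::real^'p^'n)"
  by (simp add: matrix_matrix_mult_def inner_vec_def column_def mult.commute)

lemma norm_matrix_vector_mult_le: "norm ((X::real^'n^'m) *v v) \<le> norm X * norm v"
proof -
  have "(norm (X *v v))\<^sup>2 = (\<Sum>i\<in>UNIV. (X$i \<bullet> v)\<^sup>2)"
    by (simp add: norm_vec_power2 matrix_vector_mult_component_inner)
  also have "\<dots> \<le> (\<Sum>i\<in>UNIV. (norm (X$i))\<^sup>2 * (norm v)\<^sup>2)"
  proof (rule sum_mono)
    fix i
    have "\<bar>X$i \<bullet> v\<bar> \<le> norm (X$i) * norm v" by (rule Cauchy_Schwarz_ineq2)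
    then show "(X$i \<bullet> v)\<^sup>2 \<le> (norm (X$i))\<^sup>2 * (norm v)\<^sup>2"
      by (metis abs_ge_zero power2_abs power_mono power_mult_distrib)
  qed
  also have "\<dots> = (norm X * norm v)\<^sup>2"
    by (simp add: norm_matrix_power2 sum_distrib_right power_mult_distrib)
  finally show ?thesis by (rule power2_le_imp_le) simp
qed

lemma norm_matrix_mult_le: "norm ((X::real^'n^'m) ** (Y::real^'p^'n)) \<le> norm X * norm Y"
proof -
  have "(norm (X ** Y))\<^sup>2 = (\<Sum>i\<in>UNIV. \<Sum>j\<in>UNIV. (X$i \<bullet> column j Y)\<^sup>2)"
    by (simp add: norm_matrix_power2 norm_vec_power2 matrix_mult_component_inner)
  also have "\<dots> \<le> (\<Sum>i\<in>UNIV. \<Sum>j\<in>UNIV. (norm (X$i))\<^sup>2 * (norm (column j Y))\<^sup>2)"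
  proof (intro sum_mono)
    fix i j
    have "\<bar>X$i \<bullet> column j Y\<bar> \<le> norm (X$i) * norm (column j Y)" by (rule Cauchy_Schwarz_ineq2)
    then show "(X$i \<bullet> column j Y)\<^sup>2 \<le> (norm (X$i))\<^sup>2 * (norm (column j Y))\<^sup>2"
      by (metis abs_ge_zero power2_abs power_mono power_mult_distrib)
  qed
  also have "\<dots> = (norm X * norm Y)\<^sup>2"
    by (simp add: norm_matrix_power2 sum_distrib_right sum_distrib_left[symmetric]
        sum_norm_column_power2 power_mult_distrib)
  finally show ?thesis by (rule power2_le_imp_le) simp
qed

lemma norm_diff4_le: "norm (a + b - c - d) \<le> norm a + norm b + norm c + norm (d::'a::real_normed_vector)"
proof -
  have "norm (a + b - c - d) \<le> norm (a + b - c) + norm d" by (rule norm_triangle_ineq4)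
  also have "norm (a + b - c) \<le> norm (a + b) + norm c" by (rule norm_triangle_ineq4)
  also have "norm (a + b) \<le> norm a + norm b" by (rule norm_triangle_ineq)
  finally show ?thesis by simp
qed

lemma norm_matrix_mult3_le:
  "norm ((X::real^'n^'m) ** (Y::real^'p^'n) ** (Z::real^'q^'p)) \<le> norm X * norm Y * norm Z"
  by (meson mult_right_mono norm_ge_zero norm_matrix_mult_le order_trans)

lemma norm_transpose: "norm (transpose (X::real^'n^'m)) = norm X"
proof -
  have "(norm (transpose X))\<^sup>2 = (norm X)\<^sup>2"
    by (simp add: norm_matrix_power2 norm_vec_power2 transpose_def sum.swap[of _ "UNIV::'m set"])
  then show ?thesis by (simp add: power2_eq_iff_nonneg)
qed

lemma norm_matrix_le_of_bound:
  fixes X :: "real^'n^'m"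
  assumes "\<And>v. norm (X *v v) \<le> c * norm v"
  shows "norm X \<le> sqrt CARD('n) * c"
proof -
  have c: "0 \<le> c"
    using assms[of "axis undefined 1"] by (smt (verit) norm_axis_1 norm_ge_zero mult_cancel_left1)
  have "(norm X)\<^sup>2 = (\<Sum>j\<in>UNIV. (norm (X *v axis j 1))\<^sup>2)"
    by (simp add: matrix_vector_mult_basis sum_norm_column_power2)
  also have "\<dots> \<le> (\<Sum>j\<in>(UNIV::'n set). c\<^sup>2)"
  proof (rule sum_mono)
    fix j :: 'n
    have "norm (X *v axis j 1) \<le> c" using assms[of "axis j 1"] by simp
    then show "(norm (X *v axis j 1))\<^sup>2 \<le> c\<^sup>2" by (rule power_mono) simp
  qed
  also have "\<dots> = (sqrt CARD('n) * c)\<^sup>2" by (simp add: power_mult_distrib)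
  finally show ?thesis by (rule power2_le_imp_le) (use c in simp)
qed

lemma abs_inner_matrix_vector_le: "\<bar>v \<bullet> ((X::real^'n^'n) *v v)\<bar> \<le> norm X * (norm v)\<^sup>2"
proof -
  have "\<bar>v \<bullet> (X *v v)\<bar> \<le> norm v * norm (X *v v)" by (rule Cauchy_Schwarz_ineq2)
  also have "\<dots> \<le> norm v * (norm X * norm v)" by (intro mult_left_mono norm_matrix_vector_mult_le) simp
  finally show ?thesis by (simp add: power2_eq_square mult_ac)
qed

lemma bounded_bilinear_matrix_vector_mult:
  "bounded_bilinear (\<lambda>(X::real^'n^'m) (v::real^'n). X *v v)"
proof (rule bounded_bilinear.intro)
  show "\<exists>K. \<forall>X v. norm ((X::real^'n^'m) *v v) \<le> norm X * norm v * K"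
    by (intro exI[of _ 1]) (simp add: norm_matrix_vector_mult_le)
qed (simp_all add: matrix_vector_mult_add_rdistrib matrix_vector_right_distrib
    matrix_vector_mult_scaleR scaleR_matrix_vector_assoc)

lemma matrix_add_rdistrib: "(B + C) ** A = B ** A + C ** (A::real^'p^'n)"
  by (simp add: matrix_matrix_mult_def vec_eq_iff distrib_right sum.distrib)

lemma bounded_bilinear_matrix_mult: "bounded_bilinear (\<lambda>(X::real^'n^'m) (Y::real^'p^'n). X ** Y)"
proof (rule bounded_bilinear.intro)
  show "\<exists>K. \<forall>X Y. norm ((X::real^'n^'m) ** (Y::real^'p^'n)) \<le> norm X * norm Y * K"
    by (intro exI[of _ 1]) (simp add: norm_matrix_mult_le)
qed (simp_all add: matrix_add_ldistrib matrix_add_rdistrib scalar_matrix_assoc matrix_scalar_ac)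

lemmas matrix_mult_diff_left = bounded_bilinear.diff_left[OF bounded_bilinear_matrix_mult]
  and matrix_mult_diff_right = bounded_bilinear.diff_right[OF bounded_bilinear_matrix_mult]
  and matrix_mult_scaleR_left = bounded_bilinear.scaleR_left[OF bounded_bilinear_matrix_mult]
  and matrix_mult_scaleR_right = bounded_bilinear.scaleR_right[OF bounded_bilinear_matrix_mult]
  and matrix_vector_mult_minus_left = bounded_bilinear.minus_left[OF bounded_bilinear_matrix_vector_mult]

lemma transpose_add: "transpose (X + Y) = transpose X + transpose (Y::'a::ab_group_add^'n^'m)"
  by (simp add: transpose_def vec_eq_iff)

lemma transpose_diff: "transpose (X - Y) = transpose X - transpose (Y::'a::ab_group_add^'n^'m)"
  by (simp add: transpose_def vec_eq_iff)

lemma bounded_linear_transpose: "bounded_linear (transpose :: real^'n^'m \<Rightarrow> real^'m^'n)"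
  by (rule bounded_linear_intro[of _ 1]) (simp_all add: transpose_add transpose_scalar norm_transpose)

lemma inner_matrix_vector_transpose: "(v::real^'m) \<bullet> ((X::real^'n^'m) *v w) = (transpose X *v v) \<bullet> w"
  by (metis dot_lmul_matrix transpose_matrix_vector)

lemma inner_matrix_vector_symmetric:
  "transpose X = X \<Longrightarrow> (v::real^'n) \<bullet> ((X::real^'n^'n) *v w) = (X *v v) \<bullet> w"
  by (metis inner_matrix_vector_transpose)

section \<open>Calculus on the half line\<close>

lemma has_vector_derivative_iff_quotient:
  fixes f :: "real \<Rightarrow> 'a::real_normed_vector"
  shows "(f has_vector_derivative D) (at x within S) \<longleftrightarrow>
    ((\<lambda>y. (1 / (y - x)) *\<^sub>R (f y - f x)) \<longlongrightarrow> D) (at x within S)"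
proof -
  have "norm (f y - f x - (y - x) *\<^sub>R D) / norm (y - x) = norm ((1 / (y - x)) *\<^sub>R (f y - f x) - D)"
    if "y \<noteq> x" for y
  proof -
    have "(1 / (y - x)) *\<^sub>R (f y - f x) - D = (1 / (y - x)) *\<^sub>R (f y - f x - (y - x) *\<^sub>R D)"
      using that by (simp add: scaleR_diff_right)
    then show ?thesis by (simp add: divide_inverse_commute)
  qed
  then have "((\<lambda>y. norm (f y - f x - (y - x) *\<^sub>R D) / norm (y - x)) \<longlongrightarrow> 0) (at x within S) \<longleftrightarrow>
      ((\<lambda>y. norm ((1 / (y - x)) *\<^sub>R (f y - f x) - D)) \<longlongrightarrow> 0) (at x within S)"
    by (intro tendsto_cong) (auto simp: eventually_at_filter)
  then show ?thesis
    by (simp add: has_vector_derivative_def has_derivative_iff_norm bounded_linear_scaleR_left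
        tendsto_norm_zero_iff LIM_zero_iff)
qed

lemma at_within_atLeast_eq_at: "(t::real) > 0 \<Longrightarrow> at t within {0..} = at t"
  by (rule at_within_interior) simp

lemma continuous_on_of_has_derivative_on_atLeast:
  assumes "\<And>t. 0 \<le> t \<Longrightarrow> (W has_vector_derivative W' t) (at t within {0..})"
  shows "continuous_on {0..} W"
  using assms
  by (meson atLeast_iff continuous_on_eq_continuous_within has_vector_derivative_continuous)

lemma nonneg_of_nonneg_before:
  fixes f :: "real \<Rightarrow> real"
  assumes "continuous_on {0..} f" "0 < T" "\<And>t. 0 \<le> t \<Longrightarrow> t < T \<Longrightarrow> 0 \<le> f t"
  shows "0 \<le> f T"
proof (rule tendsto_lowerbound)
  have "(f \<longlongrightarrow> f T) (at T within {0..})"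
    using assms(1,2) by (simp add: continuous_on_def)
  then show "(f \<longlongrightarrow> f T) (at T within {0..<T})"
    by (rule tendsto_within_subset) auto
  show "\<forall>\<^sub>F t in at T within {0..<T}. 0 \<le> f t"
    using assms(3) by (auto simp: eventually_at_filter intro!: always_eventually)
  show "at T within {0..<T} \<noteq> bot"
    using assms(2) by (simp add: at_within_eq_bot_iff)
qed

lemma decreasing_of_deriv_nonpos:
  fixes W W' :: "real \<Rightarrow> real"
  assumes der: "\<And>t. 0 \<le> t \<Longrightarrow> (W has_real_derivative W' t) (at t within {0..})"
    and nonpos: "\<And>s. 0 < s \<Longrightarrow> s < t \<Longrightarrow> W' s \<le> 0" and t: "0 \<le> t"
  shows "W t \<le> W 0"
proof (rule DERIV_nonpos_imp_decreasing_open[OF t])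
  have "continuous_on {0..} W"
    using der by (intro continuous_on_of_has_derivative_on_atLeast)
      (simp add: has_real_derivative_iff_has_vector_derivative)
  then show "continuous_on {0..t} W" by (rule continuous_on_subset) auto
  show "\<exists>y. (W has_real_derivative y) (at s) \<and> y \<le> 0" if "0 < s" "s < t" for s
    using der[of s] that nonpos[of s] by (auto simp: at_within_atLeast_eq_at)
qed

lemma decreasing_while_below_level:
  fixes W W' :: "real \<Rightarrow> real"
  assumes der: "\<And>t. 0 \<le> t \<Longrightarrow> (W has_real_derivative W' t) (at t within {0..})"
    and W0: "W 0 < B" and nonpos: "\<And>t. 0 \<le> t \<Longrightarrow> W t \<le> B \<Longrightarrow> W' t \<le> 0"
    and t: "0 \<le> t"
  shows "W t \<le> W 0"
proof -
  have contW: "continuous_on {0..} W"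
    using der by (intro continuous_on_of_has_derivative_on_atLeast)
      (simp add: has_real_derivative_iff_has_vector_derivative)
  have below: "W s < B" if s: "0 \<le> s" for s
  proof (rule ccontr)
    assume "\<not> W s < B"
    define S where "S = {r \<in> {0..s}. B \<le> W r}"
    have "S \<noteq> {}" using \<open>\<not> W s < B\<close> s by (auto simp: S_def)
    moreover have S_bdd: "bdd_below S" by (auto simp: S_def bdd_below_def)
    moreover have "closed S" unfolding S_def
      using contW by (intro continuous_on_closed_Collect_le continuous_on_subset[OF contW]) auto
    ultimately have "Inf S \<in> S" by (rule closed_contains_Inf)
    then have T: "0 \<le> Inf S" "B \<le> W (Inf S)" by (auto simp: S_def)
    have "W r \<le> B" if "0 \<le> r" "r < Inf S" for r
      using that cInf_lower[OF _ S_bdd, of r] \<open>Inf S \<in> S\<close> by (force simp: S_def)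
    then have "W (Inf S) \<le> W 0"
      by (intro decreasing_of_deriv_nonpos[OF der _ T(1)] nonpos) auto
    with T W0 show False by simp
  qed
  show ?thesis
    by (rule decreasing_of_deriv_nonpos[OF der _ t]) (use below nonpos in \<open>auto intro: less_imp_le\<close>)
qed

lemma gronwall_vanishing:
  fixes \<phi> \<phi>' :: "real \<Rightarrow> real"
  assumes der: "\<And>t. 0 \<le> t \<Longrightarrow> (\<phi> has_real_derivative \<phi>' t) (at t within {0..})"
    and zero: "\<phi> 0 = 0" and nonneg: "\<And>t. 0 \<le> t \<Longrightarrow> 0 \<le> \<phi> t"
    and growth: "\<And>t. 0 \<le> t \<Longrightarrow> t \<le> T \<Longrightarrow> \<phi>' t \<le> K * \<phi> t"
    and t: "0 \<le> t" "t \<le> T"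
  shows "\<phi> t = 0"
proof -
  define \<psi> where "\<psi> s = \<phi> s * exp (- K * s)" for s
  have "(\<psi> has_real_derivative \<phi>' s * exp (- K * s) + (exp (- K * s) * (- K)) * \<phi> s)
      (at s within {0..})" if "0 \<le> s" for s
    unfolding \<psi>_def by (auto intro!: derivative_eq_intros der[OF that])
  then have "\<psi> t \<le> \<psi> 0"
  proof (rule decreasing_of_deriv_nonpos[OF _ _ t(1)])
    fix s assume s: "0 < s" "s < t"
    have "\<phi>' s * exp (- K * s) \<le> (K * \<phi> s) * exp (- K * s)"
      using growth[of s] s t by (intro mult_right_mono) auto
    then show "\<phi>' s * exp (- K * s) + (exp (- K * s) * (- K)) * \<phi> s \<le> 0"
      by (simp add: algebra_simps)
  qed
  then have "\<phi> t \<le> 0" by (simp add: \<psi>_def zero mult_le_0_iff)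
  with nonneg[OF t(1)] show ?thesis by simp
qed

lemma has_vector_derivative_matrix_inverse:
  fixes P Q :: "real \<Rightarrow> real^'n^'n"
  assumes dP: "(P has_vector_derivative P') (at t within S)"
    and inv: "\<And>s. s \<in> S \<Longrightarrow> Q s ** P s = mat 1 \<and> P s ** Q s = mat 1"
    and bound: "\<And>s. s \<in> S \<Longrightarrow> norm (Q s) \<le> B" and t: "t \<in> S"
  shows "(Q has_vector_derivative - (Q t ** P' ** Q t)) (at t within S)"
proof -
  have diff: "Q s - Q t = - (Q s ** (P s - P t) ** Q t)" if "s \<in> S" for s
  proof -
    have "Q s ** (P s - P t) ** Q t = (Q s ** P s) ** Q t - Q s ** (P t ** Q t)"
      by (simp add: matrix_mult_diff_left matrix_mult_diff_right matrix_mul_assoc)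
    also have "\<dots> = Q t - Q s" using inv[OF that] inv[OF t] by simp
    finally show ?thesis by simp
  qed
  have "((\<lambda>s. P s - P t) \<longlongrightarrow> 0) (at t within S)"
    using has_vector_derivative_continuous[OF dP] by (simp add: continuous_within LIM_zero)
  then have "((\<lambda>s. B * norm (P s - P t) * norm (Q t)) \<longlongrightarrow> 0) (at t within S)"
    by (intro tendsto_mult_right_zero tendsto_mult_left_zero tendsto_norm_zero)
  moreover have "\<forall>\<^sub>F s in at t within S. norm (Q s - Q t) \<le> B * norm (P s - P t) * norm (Q t)"
    unfolding eventually_at_filter
  proof (intro always_eventually allI impI)
    fix s assume "s \<in> S"
    have "norm (Q s - Q t) \<le> norm (Q s) * norm (P s - P t) * norm (Q t)"
      unfolding diff[OF \<open>s \<in> S\<close>] norm_minus_cancel by (rule norm_matrix_mult3_le)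
    also have "\<dots> \<le> B * norm (P s - P t) * norm (Q t)"
      using bound[OF \<open>s \<in> S\<close>] by (intro mult_right_mono) auto
    finally show "norm (Q s - Q t) \<le> B * norm (P s - P t) * norm (Q t)" .
  qed
  ultimately have "((\<lambda>s. Q s - Q t) \<longlongrightarrow> 0) (at t within S)"
    by (rule Lim_null_comparison[rotated])
  then have Q: "(Q \<longlongrightarrow> Q t) (at t within S)" by (simp add: LIM_zero_iff)
  have "((\<lambda>s. - (Q s ** ((1 / (s - t)) *\<^sub>R (P s - P t)) ** Q t)) \<longlongrightarrow> - (Q t ** P' ** Q t))
      (at t within S)"
    using dP unfolding has_vector_derivative_iff_quotient
    by (intro tendsto_minus bounded_bilinear.tendsto[OF bounded_bilinear_matrix_mult] Q tendsto_const)
  moreover have "\<forall>\<^sub>F s in at t within S. - (Q s ** ((1 / (s - t)) *\<^sub>R (P s - P t)) ** Q t)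
      = (1 / (s - t)) *\<^sub>R (Q s - Q t)"
    unfolding eventually_at_filter
    by (intro always_eventually) (simp add: diff matrix_mult_scaleR_left matrix_mult_scaleR_right)
  ultimately show ?thesis
    unfolding has_vector_derivative_iff_quotient by (rule Lim_transform_eventually)
qed

section \<open>Positive definite matrices\<close>

lemma pos_def_uniform:
  fixes M :: "real^'n^'n"
  assumes pd: "\<And>v. v \<noteq> 0 \<Longrightarrow> 0 < v \<bullet> (M *v v)"
  shows "\<exists>c>0. \<forall>w. c * (norm w)\<^sup>2 \<le> w \<bullet> (M *v w)"
proof -
  have "continuous_on (sphere 0 1) (\<lambda>w::real^'n. w \<bullet> (M *v w))"
    by (intro continuous_intros bounded_bilinear.continuous_on[OF bounded_bilinear_matrix_vector_mult])
  moreover have "sphere (0::real^'n) 1 \<noteq> {}"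
    using norm_axis_1[of undefined] by (metis mem_sphere_0 empty_iff)
  ultimately obtain w0 where w0: "w0 \<in> sphere 0 1"
    and min: "\<And>y. y \<in> sphere 0 1 \<Longrightarrow> w0 \<bullet> (M *v w0) \<le> y \<bullet> (M *v y)"
    using continuous_attains_inf[OF compact_sphere] by blast
  define c where "c = w0 \<bullet> (M *v w0)"
  have "w0 \<noteq> 0" using w0 by auto
  then have "0 < c" using pd unfolding c_def by blast
  moreover have "c * (norm w)\<^sup>2 \<le> w \<bullet> (M *v w)" for w
  proof (cases "w = 0")
    case False
    then have "(1 / norm w) *\<^sub>R w \<in> sphere 0 1" by simp
    then have "c \<le> ((1 / norm w) *\<^sub>R w) \<bullet> (M *v ((1 / norm w) *\<^sub>R w))"
      using min unfolding c_def by blast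
    also have "\<dots> = (w \<bullet> (M *v w)) / (norm w)\<^sup>2"
      by (simp add: matrix_vector_mult_scaleR power2_eq_square)
    finally show ?thesis using False by (simp add: field_simps)
  qed simp
  ultimately show ?thesis by blast
qed

definition pos_def_lower_bound :: "real^'n^'n \<Rightarrow> real" where
  "pos_def_lower_bound M = (SOME c. 0 < c \<and> (\<forall>w. c * (norm w)\<^sup>2 \<le> w \<bullet> (M *v w)))"

lemma pos_def_lower_bound:
  fixes M :: "real^'n^'n"
  assumes "\<And>v. v \<noteq> 0 \<Longrightarrow> 0 < v \<bullet> (M *v v)"
  shows "0 < pos_def_lower_bound M" and "pos_def_lower_bound M * (norm w)\<^sup>2 \<le> w \<bullet> (M *v w)"
  using someI_ex[OF pos_def_uniform[OF assms]] unfolding pos_def_lower_bound_def by auto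

lemma psd_kernel_of_quadratic_form_zero:
  fixes X :: "real^'n^'n"
  assumes sym: "transpose X = X" and psd: "\<And>w. 0 \<le> w \<bullet> (X *v w)" and zero: "v \<bullet> (X *v v) = 0"
  shows "X *v v = 0"
proof (rule ccontr)
  assume "X *v v \<noteq> 0"
  define z where "z = X *v v"
  define a where "a = z \<bullet> z"
  define k where "k = z \<bullet> (X *v z)"
  define s where "s = - a / (\<bar>k\<bar> + 1)"
  have a: "0 < a" using \<open>X *v v \<noteq> 0\<close> by (simp add: a_def z_def)
  have "v \<bullet> (X *v z) = a"
    using inner_matrix_vector_symmetric[OF sym, of v z] by (simp add: a_def z_def inner_commute)
  \<comment> \<open>moving from v along X v, the form becomes negative to first order\<close>
  then have "(v + s *\<^sub>R z) \<bullet> (X *v (v + s *\<^sub>R z)) = 2 * s * a + s * s * k"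
    using zero by (simp add: a_def k_def z_def matrix_vector_right_distrib matrix_vector_mult_scaleR
        inner_add_left inner_add_right algebra_simps)
  also have "\<dots> < 0"
  proof -
    have "s * s * k \<le> s * s * \<bar>k\<bar>" by (simp add: mult_left_mono)
    also have "\<dots> = a * a * \<bar>k\<bar> / ((\<bar>k\<bar> + 1) * (\<bar>k\<bar> + 1))" by (simp add: s_def)
    also have "\<dots> \<le> a * a / (\<bar>k\<bar> + 1)"
      by (simp add: divide_simps a) (smt (verit) a mult_nonneg_nonneg zero_less_mult_iff)
    finally have "s * s * k \<le> a * a / (\<bar>k\<bar> + 1)" .
    moreover have "2 * s * a = - 2 * a * a / (\<bar>k\<bar> + 1)" by (simp add: s_def)
    moreover have "0 < a * a / (\<bar>k\<bar> + 1)" using a by simp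
    ultimately show ?thesis by linarith
  qed
  finally show False using psd by (metis not_le)
qed

lemma psd_first_failure_time:
  fixes R :: "real \<Rightarrow> real^'n^'n"
  assumes contR: "continuous_on {0..} R"
    and init: "\<And>v. v \<noteq> 0 \<Longrightarrow> 0 < v \<bullet> (R 0 *v v)"
    and fail: "0 \<le> t0" "w0 \<bullet> (R t0 *v w0) < 0"
  obtains T where "0 \<le> T" "\<And>v. 0 \<le> v \<bullet> (R T *v v)"
    "\<And>d. 0 < d \<Longrightarrow> \<exists>t w. T < t \<and> t < T + d \<and> norm w = 1 \<and> w \<bullet> (R t *v w) < 0"
proof -
  define q where "q t v = v \<bullet> (R t *v v)" for t and v :: "real^'n"
  have unit: "\<exists>v'. norm v' = 1 \<and> q t v' < 0" if "q t v < 0" for t v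
  proof -
    have "v \<noteq> 0" using that by (auto simp: q_def)
    moreover have "q t ((1 / norm v) *\<^sub>R v) = (1 / norm v)\<^sup>2 * q t v"
      by (simp add: q_def matrix_vector_mult_scaleR power2_eq_square)
    ultimately show ?thesis using that by (intro exI[of _ "(1 / norm v) *\<^sub>R v"]) (simp add: mult_pos_neg)
  qed
  define Bad where "Bad = {t. 0 \<le> t \<and> t \<le> t0 \<and> (\<exists>v. norm v = 1 \<and> q t v < 0)}"
  define T where "T = Inf Bad"
  have t0_Bad: "t0 \<in> Bad" using unit[of t0 w0] fail by (auto simp: Bad_def q_def)
  have Bad_bdd: "bdd_below Bad" by (auto simp: Bad_def bdd_below_def)
  have T0: "0 \<le> T" unfolding T_def using t0_Bad by (intro cInf_greatest) (auto simp: Bad_def)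
  have before: "0 \<le> q t v" if "0 \<le> t" "t < T" for t v
  proof (rule ccontr)
    assume "\<not> 0 \<le> q t v"
    then have "t \<in> Bad"
      using unit[of t v] that cInf_lower[OF t0_Bad Bad_bdd] by (auto simp: Bad_def T_def)
    then have "T \<le> t" unfolding T_def using Bad_bdd by (rule cInf_lower)
    with that show False by simp
  qed
  have at_T: "0 \<le> q T v" for v
  proof (cases "T = 0")
    case True
    then show ?thesis using init[of v] by (cases "v = 0") (auto simp: q_def less_imp_le)
  next
    case False
    have "continuous_on {0..} (\<lambda>t. q t v)"
      unfolding q_def
      by (intro continuous_intros bounded_bilinear.continuous_on[OF bounded_bilinear_matrix_vector_mult] contR)
    moreover have "0 < T" using False T0 by simp
    ultimately show ?thesis by (rule nonneg_of_nonneg_before[OF _ _ before])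
  qed
  have "\<exists>t v. T < t \<and> t < T + d \<and> norm v = 1 \<and> q t v < 0" if "0 < d" for d
  proof -
    have "Inf Bad < T + d" using \<open>0 < d\<close> unfolding T_def by simp
    then obtain t where t: "t \<in> Bad" "t < T + d" using cInf_less_iff[of Bad] t0_Bad Bad_bdd by auto
    moreover have "T \<le> t" unfolding T_def by (rule cInf_lower[OF t(1) Bad_bdd])
    moreover have "t \<noteq> T" using t(1) at_T by (auto simp: Bad_def not_less[symmetric])
    moreover obtain v where "norm v = 1" "q t v < 0" using t(1) unfolding Bad_def by blast
    ultimately show ?thesis using t(2) by (intro exI[of _ t] exI[of _ v]) simp
  qed
  then show thesis using T0 at_T unfolding q_def by (intro that)
qed

lemma psd_first_failure:
  fixes R :: "real \<Rightarrow> real^'n^'n"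
  assumes contR: "continuous_on {0..} R"
    and init: "\<And>v. v \<noteq> 0 \<Longrightarrow> 0 < v \<bullet> (R 0 *v v)"
    and fail: "0 \<le> t0" "w0 \<bullet> (R t0 *v w0) < 0"
  obtains T s w w_lim where "0 \<le> T" "\<And>v. 0 \<le> v \<bullet> (R T *v v)"
    "s \<longlonglongrightarrow> T" "\<And>n. T < s n" "w \<longlonglongrightarrow> w_lim" "norm w_lim = 1"
    "\<And>n. w n \<bullet> (R (s n) *v w n) < 0"
proof -
  obtain T where T: "0 \<le> T" "\<And>v. 0 \<le> v \<bullet> (R T *v v)"
    and near: "\<And>d. 0 < d \<Longrightarrow> \<exists>t w. T < t \<and> t < T + d \<and> norm w = 1 \<and> w \<bullet> (R t *v w) < 0"
    using psd_first_failure_time[OF assms] by blast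
  have "\<exists>t w. T < t \<and> t < T + 1 / Suc n \<and> norm w = 1 \<and> w \<bullet> (R t *v w) < 0" for n
    by (rule near) simp
  then obtain s w where sw: "\<And>n. T < s n \<and> s n < T + 1 / Suc n \<and> norm (w n) = 1 \<and> w n \<bullet> (R (s n) *v w n) < 0"
    by metis
  have "\<forall>n. w n \<in> sphere 0 1" using sw by simp
  then obtain w_lim r where "w_lim \<in> sphere 0 1" "strict_mono r" "(w \<circ> r) \<longlonglongrightarrow> w_lim"
    using compact_imp_seq_compact[OF compact_sphere] by (metis seq_compactE)
  moreover have "s \<longlonglongrightarrow> T"
  proof (rule tendsto_sandwich[of "\<lambda>n. T" _ _ "\<lambda>n. T + 1 / Suc n"])
    show "(\<lambda>n. T + 1 / real (Suc n)) \<longlonglongrightarrow> T"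
      using tendsto_add[OF tendsto_const LIMSEQ_inverse_real_of_nat, of T] by (simp add: inverse_eq_divide)
  qed (use sw in \<open>auto intro!: always_eventually less_imp_le\<close>)
  ultimately show thesis
    using T sw LIMSEQ_subseq_LIMSEQ[of s T r] by (intro that[of T "s \<circ> r" "w \<circ> r" w_lim]) auto
qed

lemma psd_persists:
  fixes R R' :: "real \<Rightarrow> real^'n^'n"
  assumes der: "\<And>t. 0 \<le> t \<Longrightarrow> (R has_vector_derivative R' t) (at t within {0..})"
    and sym: "\<And>t. 0 \<le> t \<Longrightarrow> transpose (R t) = R t"
    and init: "\<And>v. v \<noteq> 0 \<Longrightarrow> 0 < v \<bullet> (R 0 *v v)"
    and kernel: "\<And>t v. 0 \<le> t \<Longrightarrow> v \<noteq> 0 \<Longrightarrow> (\<forall>w. 0 \<le> w \<bullet> (R t *v w)) \<Longrightarrow> R t *v v = 0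
                  \<Longrightarrow> 0 < v \<bullet> (R' t *v v)"
    and t0: "0 \<le> t0"
  shows "0 \<le> w0 \<bullet> (R t0 *v w0)"
proof (rule ccontr)
  have contR: "continuous_on {0..} R"
    using der by (rule continuous_on_of_has_derivative_on_atLeast)
  assume "\<not> 0 \<le> w0 \<bullet> (R t0 *v w0)"
  then obtain T s w w_lim where T: "0 \<le> T" "\<And>v. 0 \<le> v \<bullet> (R T *v v)"
    and s: "s \<longlonglongrightarrow> T" "\<And>n. T < s n" and w: "w \<longlonglongrightarrow> w_lim" "norm w_lim = 1"
    and neg: "\<And>n. w n \<bullet> (R (s n) *v w n) < 0"
    using psd_first_failure[OF contR init t0] by (metis not_le)
  have s_within: "filterlim s (at T within {0..}) sequentially"
    unfolding filterlim_at using s T(1) by (auto intro!: always_eventually less_imp_le order_trans[OF T(1)])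
  have "(\<lambda>n. R (s n)) \<longlonglongrightarrow> R T"
    using contR T(1) s_within by (metis atLeast_iff continuous_on_def filterlim_compose order_refl)
  then have "(\<lambda>n. w n \<bullet> (R (s n) *v w n)) \<longlonglongrightarrow> w_lim \<bullet> (R T *v w_lim)"
    by (intro tendsto_inner w bounded_bilinear.tendsto[OF bounded_bilinear_matrix_vector_mult])
  then have "w_lim \<bullet> (R T *v w_lim) \<le> 0"
    by (rule tendsto_upperbound) (use neg in \<open>auto intro!: always_eventually less_imp_le\<close>)
  \<comment> \<open>the failing directions accumulate at a kernel vector of R T, along which R increases\<close>
  then have "R T *v w_lim = 0"
    using T by (intro psd_kernel_of_quadratic_form_zero[OF sym[OF T(1)]]) (auto intro: antisym)
  moreover have "w_lim \<noteq> 0" using w(2) by auto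
  ultimately have pos: "0 < w_lim \<bullet> (R' T *v w_lim)"
    using kernel[OF T(1)] T(2) by blast
  define D where "D n = (1 / (s n - T)) *\<^sub>R (R (s n) - R T)" for n
  have "D \<longlonglongrightarrow> R' T"
    using filterlim_compose[OF der[OF T(1), unfolded has_vector_derivative_iff_quotient] s_within]
    by (simp add: D_def[abs_def] o_def)
  then have "(\<lambda>n. w n \<bullet> (D n *v w n)) \<longlonglongrightarrow> w_lim \<bullet> (R' T *v w_lim)"
    by (intro tendsto_inner w bounded_bilinear.tendsto[OF bounded_bilinear_matrix_vector_mult])
  then have "\<forall>\<^sub>F n in sequentially. 0 < w n \<bullet> (D n *v w n)"
    using pos by (rule order_tendstoD)
  then have "\<forall>\<^sub>F n in sequentially. False"
  proof eventually_elim
    case (elim n)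
    have "R (s n) = R T + (s n - T) *\<^sub>R D n" using s(2)[of n] by (simp add: D_def)
    then have "w n \<bullet> (R (s n) *v w n) = w n \<bullet> (R T *v w n) + (s n - T) * (w n \<bullet> (D n *v w n))"
      by (simp add: matrix_vector_mult_add_rdistrib scaleR_matrix_vector_assoc[symmetric] inner_add_right)
    moreover have "0 < (s n - T) * (w n \<bullet> (D n *v w n))" using elim s(2)[of n] by simp
    ultimately show False using T(2)[of "w n"] neg[of n] by linarith
  qed
  then show False by simp
qed

section \<open>Matrices of the observable form\<close>

lemma obs_coords_pos_ge_1: "obs_coords l blk pos \<Longrightarrow> 1 \<le> pos k"
  unfolding obs_coords_def bij_betw_def by auto

lemma obs_coords_pos_le: "obs_coords l blk pos \<Longrightarrow> pos k \<le> l (blk k)"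
  unfolding obs_coords_def bij_betw_def by auto

lemma obs_coords_inj: "obs_coords l blk pos \<Longrightarrow> blk k = blk k' \<Longrightarrow> pos k = pos k' \<Longrightarrow> k = k'"
  unfolding obs_coords_def bij_betw_def inj_on_def by auto

lemma obs_coords_surj:
  "obs_coords l blk pos \<Longrightarrow> 1 \<le> j \<Longrightarrow> j \<le> l i \<Longrightarrow> \<exists>k. blk k = i \<and> pos k = j"
  unfolding obs_coords_def bij_betw_def
  by (metis (mono_tags, lifting) case_prodI image_iff mem_Collect_eq prod.inject)

lemma obs_coords_pos_le_card:
  assumes oc: "obs_coords l blk (pos::'n::finite \<Rightarrow> nat)"
  shows "pos k \<le> CARD('n)"
proof -
  let ?i = "blk k"
  have "\<forall>j\<in>{1..l ?i}. \<exists>k'. blk k' = ?i \<and> pos k' = j" using obs_coords_surj[OF oc] by auto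
  then obtain g where g: "\<And>j. j \<in> {1..l ?i} \<Longrightarrow> blk (g j) = ?i \<and> pos (g j) = j" by metis
  have "inj_on g {1..l ?i}" by (metis g inj_onI)
  then have "l ?i = card (g ` {1..l ?i})" by (simp add: card_image)
  also have "\<dots> \<le> CARD('n)" by (rule card_mono) auto
  finally show ?thesis using obs_coords_pos_le[OF oc, of k] by simp
qed

definition selection_matrix :: "real^'n^'m \<Rightarrow> bool" where
  "selection_matrix M \<longleftrightarrow>
     (\<forall>i j. M$i$j = 0 \<or> M$i$j = 1) \<and> (\<forall>i j j'. M$i$j \<noteq> 0 \<longrightarrow> M$i$j' \<noteq> 0 \<longrightarrow> j = j')"

lemma selection_matrix_Abar: "obs_coords l blk pos \<Longrightarrow> selection_matrix (Abar blk pos)"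
  by (auto simp: selection_matrix_def Abar_def split: if_splits intro: obs_coords_inj)

lemma selection_matrix_Cbar: "obs_coords l blk pos \<Longrightarrow> selection_matrix (Cbar blk pos)"
  by (auto simp: selection_matrix_def Cbar_def split: if_splits intro: obs_coords_inj)

lemma selection_matrix_vector_mult_power2:
  assumes "selection_matrix M"
  shows "((M *v x)$i)\<^sup>2 = (\<Sum>j\<in>UNIV. M$i$j * (x$j)\<^sup>2)"
proof (cases "\<exists>j. M$i$j \<noteq> 0")
  case True
  then obtain j0 where "M$i$j0 \<noteq> 0" by blast
  with assms have M: "M$i$j = (if j = j0 then 1 else 0)" for j
    unfolding selection_matrix_def by metis
  have "(M *v x)$i = (\<Sum>j\<in>UNIV. if j = j0 then x$j0 else 0)"
    unfolding matrix_vector_mult_def vec_lambda_beta by (intro sum.cong) (auto simp: M)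
  moreover have "(\<Sum>j\<in>UNIV. M$i$j * (x$j)\<^sup>2) = (\<Sum>j\<in>UNIV. if j = j0 then (x$j0)\<^sup>2 else 0)"
    by (intro sum.cong) (auto simp: M)
  ultimately show ?thesis by simp
qed (simp add: matrix_vector_mult_def)

lemma weighted_sum_selection_power2:
  assumes "selection_matrix M"
  shows "(\<Sum>i\<in>UNIV. w i * ((M *v x)$i)\<^sup>2) = (\<Sum>j\<in>UNIV. (\<Sum>i\<in>UNIV. w i * M$i$j) * (x$j)\<^sup>2)"
proof -
  have "(\<Sum>i\<in>UNIV. w i * ((M *v x)$i)\<^sup>2) = (\<Sum>i\<in>UNIV. \<Sum>j\<in>UNIV. w i * M$i$j * (x$j)\<^sup>2)"
    by (simp add: selection_matrix_vector_mult_power2[OF assms] sum_distrib_left mult.assoc)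
  also have "\<dots> = (\<Sum>j\<in>UNIV. (\<Sum>i\<in>UNIV. w i * M$i$j) * (x$j)\<^sup>2)"
    by (subst sum.swap) (simp add: sum_distrib_right)
  finally show ?thesis .
qed

text \<open>Abar moves each coordinate one position up its block, so position-indexed weights are
  shifted down by one and the first coordinates of the blocks drop out.\<close>
lemma weighted_sum_Abar_power2:
  assumes oc: "obs_coords l blk pos"
  shows "(\<Sum>k\<in>UNIV. w (pos k) * ((Abar blk pos *v x)$k)\<^sup>2)
         = (\<Sum>k\<in>UNIV. (if 2 \<le> pos k then w (pos k - 1) else 0) * (x$k)\<^sup>2)"
proof -
  let ?A = "Abar blk pos"
  have col: "(\<Sum>k\<in>UNIV. w (pos k) * ?A$k$k') = (if 2 \<le> pos k' then w (pos k' - 1) else 0)" for k'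
  proof (cases "2 \<le> pos k'")
    case True
    have "1 \<le> pos k' - 1" "pos k' - 1 \<le> l (blk k')"
      using True obs_coords_pos_le[OF oc, of k'] by auto
    then obtain k0 where k0: "blk k0 = blk k'" "pos k0 = pos k' - 1"
      using obs_coords_surj[OF oc] by blast
    have "?A$k$k' = (if k = k0 then 1 else 0)" for k
      using k0 True by (auto simp: Abar_def intro: obs_coords_inj[OF oc])
    then have "(\<Sum>k\<in>UNIV. w (pos k) * ?A$k$k') = (\<Sum>k\<in>UNIV. if k = k0 then w (pos k0) else 0)"
      by (intro sum.cong) auto
    then show ?thesis using True k0 by simp
  next
    case False
    then have "?A$k$k' = 0" for k using obs_coords_pos_ge_1[OF oc, of k] by (auto simp: Abar_def)
    then show ?thesis using False by simp
  qed
  show ?thesis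
    by (simp add: weighted_sum_selection_power2[OF selection_matrix_Abar[OF oc]] col)
qed

lemma norm_Cbar_power2:
  assumes oc: "obs_coords l blk pos"
  shows "(norm (Cbar blk pos *v v))\<^sup>2 = (\<Sum>k\<in>UNIV. (if pos k = 1 then 1 else 0) * (v$k)\<^sup>2)"
proof -
  have col: "(\<Sum>i\<in>UNIV. 1 * Cbar blk pos $i$k) = (if pos k = 1 then 1 else 0)" for k
  proof -
    have "Cbar blk pos $i$k = (if i = blk k \<and> pos k = 1 then 1 else 0)" for i by (auto simp: Cbar_def)
    then show ?thesis by simp
  qed
  have "(norm (Cbar blk pos *v v))\<^sup>2 = (\<Sum>i\<in>UNIV. 1 * ((Cbar blk pos *v v)$i)\<^sup>2)"
    by (simp add: norm_vec_power2)
  also have "\<dots> = (\<Sum>k\<in>UNIV. (if pos k = 1 then 1 else 0) * (v$k)\<^sup>2)"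
    by (simp only: weighted_sum_selection_power2[OF selection_matrix_Cbar[OF oc]] col)
  finally show ?thesis .
qed

lemma sub_dist_power2: "(sub_dist pos j x y)\<^sup>2 = (\<Sum>k'\<in>{k'. pos k' \<le> j}. (x $ k' - y $ k')\<^sup>2)"
  unfolding sub_dist_def by (simp add: sum_nonneg)

lemma sub_dist_le_norm: "sub_dist pos j w 0 \<le> norm w"
proof -
  have "(\<Sum>k'\<in>{k'. pos k' \<le> j}. (w $ k' - 0 $ k')\<^sup>2) \<le> (\<Sum>k'\<in>UNIV. (w $ k')\<^sup>2)"
    by (simp add: sum_mono2)
  then show ?thesis unfolding sub_dist_def norm_vec_def L2_set_def by (simp add: real_sqrt_le_iff)
qed

lemma sub_dist_translate_scale: "sub_dist pos j (x + h *\<^sub>R w) x = \<bar>h\<bar> * sub_dist pos j w 0"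
proof -
  have "(\<Sum>k'\<in>{k'. pos k' \<le> j}. ((x + h *\<^sub>R w) $ k' - x $ k')\<^sup>2)
      = h\<^sup>2 * (\<Sum>k'\<in>{k'. pos k' \<le> j}. (w $ k' - 0 $ k')\<^sup>2)"
    by (simp add: sum_distrib_left power_mult_distrib)
  then show ?thesis unfolding sub_dist_def by (simp add: real_sqrt_mult)
qed

lemma sub_dist_axis: "sub_dist pos (pos k) (axis k 1) 0 = 1"
proof -
  have "(\<Sum>k'\<in>{k'. pos k' \<le> pos k}. (axis k 1 $ k' - 0 $ k')\<^sup>2)
      = (\<Sum>k'\<in>{k'. pos k' \<le> pos k}. if k' = k then 1 else 0 :: real)"
    by (intro sum.cong) (auto simp: axis_def)
  then show ?thesis unfolding sub_dist_def by simp
qed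

text \<open>Summing the lower triangular distances with weights decreasing in the position costs at
  most a factor n, since each coordinate occurs in at most n of them, each time with a weight no
  larger than its own.\<close>
lemma weighted_sum_sub_dist_power2_le:
  fixes v :: "real^'n" and pos :: "'n \<Rightarrow> nat"
  assumes antimono: "\<And>i j. i \<le> j \<Longrightarrow> w j \<le> w i" and nonneg: "\<And>j. 0 \<le> w j"
  shows "(\<Sum>k\<in>UNIV. w (pos k) * (sub_dist pos (pos k) v 0)\<^sup>2)
         \<le> CARD('n) * (\<Sum>k\<in>UNIV. w (pos k) * (v$k)\<^sup>2)"
proof -
  have "(\<Sum>k\<in>UNIV. w (pos k) * (sub_dist pos (pos k) v 0)\<^sup>2)
      = (\<Sum>k\<in>UNIV. \<Sum>k'\<in>UNIV. if pos k' \<le> pos k then w (pos k) * (v$k')\<^sup>2 else 0)"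
    by (simp add: sub_dist_power2 sum_distrib_left sum.If_cases Int_def)
  also have "\<dots> = (\<Sum>k'\<in>UNIV. \<Sum>k\<in>UNIV. if pos k' \<le> pos k then w (pos k) * (v$k')\<^sup>2 else 0)"
    by (rule sum.swap)
  also have "\<dots> \<le> (\<Sum>k'\<in>UNIV. \<Sum>k::'n\<in>UNIV. w (pos k') * (v$k')\<^sup>2)"
    by (intro sum_mono) (auto intro!: mult_right_mono antimono simp: nonneg)
  also have "\<dots> = CARD('n) * (\<Sum>k\<in>UNIV. w (pos k) * (v$k)\<^sup>2)"
    by (simp add: sum_distrib_left)
  finally show ?thesis .
qed

section \<open>A constant Lyapunov matrix for the observable form\<close>

lemma weighted_young:
  fixes p q m x y :: real
  assumes "0 \<le> p" "0 \<le> q" "m\<^sup>2 \<le> p * q"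
  shows "\<bar>m * x * y\<bar> \<le> (p * x\<^sup>2 + q * y\<^sup>2) / 2"
proof -
  have "m\<^sup>2 * (x\<^sup>2 * y\<^sup>2) \<le> (p * q) * (x\<^sup>2 * y\<^sup>2)" using assms(3) by (intro mult_right_mono) auto
  then have "(2 * \<bar>m * x * y\<bar>)\<^sup>2 \<le> 4 * (p * x\<^sup>2) * (q * y\<^sup>2)"
    by (simp add: power_mult_distrib abs_mult power2_abs mult.assoc mult.left_commute)
  also have "\<dots> \<le> (p * x\<^sup>2 + q * y\<^sup>2)\<^sup>2"
    using zero_le_power2[of "p * x\<^sup>2 - q * y\<^sup>2"] by (simp add: power2_eq_square algebra_simps)
  finally show ?thesis
    using power2_le_imp_le[of "2 * \<bar>m * x * y\<bar>" "p * x\<^sup>2 + q * y\<^sup>2"] assms by simp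
qed

text \<open>These weights satisfy c(i-1) c(i+1) = R^2 c(i)^2, so each cross term of the Lyapunov
  form below can be absorbed by its neighbours with a gain R to spare.\<close>
definition lyap_weight :: "real \<Rightarrow> nat \<Rightarrow> nat \<Rightarrow> real" where
  "lyap_weight R T i = R ^ ((T - i)\<^sup>2)"

lemma lyap_weight_ge_1: "1 \<le> R \<Longrightarrow> 1 \<le> lyap_weight R T i"
  by (simp add: lyap_weight_def one_le_power)

lemma lyap_weight_antimono: "1 \<le> R \<Longrightarrow> i \<le> j \<Longrightarrow> lyap_weight R T j \<le> lyap_weight R T i"
  unfolding lyap_weight_def by (intro power_increasing power_mono) auto

lemma lyap_weight_log_concave:
  assumes "1 \<le> i" "i + 1 \<le> T"
  shows "lyap_weight R T (i - 1) * lyap_weight R T (i + 1) = R\<^sup>2 * (lyap_weight R T i)\<^sup>2"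
proof -
  obtain d where T: "T = i + 1 + d" using assms(2) by (metis le_add_diff_inverse)
  have "(T - (i - 1))\<^sup>2 + (T - (i + 1))\<^sup>2 = 2 + (T - i)\<^sup>2 * 2"
    using assms(1) unfolding T by (simp add: power2_eq_square algebra_simps)
  then show ?thesis unfolding lyap_weight_def by (metis power_add power_mult)
qed

lemma lyap_weight_log_concave2:
  assumes "2 \<le> i" "i + 2 \<le> T" "1 \<le> R"
  shows "R\<^sup>2 * (lyap_weight R T i)\<^sup>2 \<le> lyap_weight R T (i - 2) * lyap_weight R T (i + 2)"
proof -
  obtain d where T: "T = i + 2 + d" using assms(2) by (metis le_add_diff_inverse)
  have e: "(T - (i - 2))\<^sup>2 + (T - (i + 2))\<^sup>2 = 2 + (T - i)\<^sup>2 * 2 + 6"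
    using assms(1) unfolding T by (simp add: power2_eq_square algebra_simps)
  have "R\<^sup>2 * (lyap_weight R T i)\<^sup>2 = R ^ (2 + (T - i)\<^sup>2 * 2)"
    unfolding lyap_weight_def by (metis power_add power_mult)
  also have "\<dots> \<le> R ^ (2 + (T - i)\<^sup>2 * 2 + 6)" using assms(3) by (intro power_increasing) auto
  also have "\<dots> = lyap_weight R T (i - 2) * lyap_weight R T (i + 2)"
    unfolding lyap_weight_def e[symmetric] by (simp add: power_add)
  finally show ?thesis .
qed

lemma lyap_weight_step2:
  assumes "2 \<le> i" "i \<le> T" "1 \<le> R"
  shows "R\<^sup>2 * lyap_weight R T i \<le> lyap_weight R T (i - 2)"
proof -
  obtain d where T: "T = i + d" using assms(2) by (metis le_add_diff_inverse)
  have e: "(T - (i - 2))\<^sup>2 = (T - i)\<^sup>2 + 2 + (4 * d + 2)"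
    using assms(1) unfolding T by (simp add: power2_eq_square algebra_simps)
  have "R\<^sup>2 * lyap_weight R T i = R ^ ((T - i)\<^sup>2 + 2)"
    unfolding lyap_weight_def by (simp add: power_add power2_eq_square)
  also have "\<dots> \<le> R ^ ((T - i)\<^sup>2 + 2 + (4 * d + 2))" using assms(3) by (intro power_increasing) auto
  also have "\<dots> = lyap_weight R T (i - 2)" unfolding lyap_weight_def e by simp
  finally show ?thesis .
qed

definition diag_mat :: "('n::finite \<Rightarrow> real) \<Rightarrow> real^'n^'n" where
  "diag_mat f = (\<chi> i j. if i = j then f i else 0)"

lemma diag_mat_vector_mult: "(diag_mat f *v w) $ k = f k * w $ k"
proof -
  have "(diag_mat f *v w) $ k = (\<Sum>j\<in>UNIV. (if k = j then f k else 0) * w$j)"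
    by (simp add: diag_mat_def matrix_vector_mult_def)
  also have "\<dots> = (\<Sum>j\<in>UNIV. if j = k then f k * w$k else 0)" by (rule sum.cong) auto
  finally show ?thesis by simp
qed

lemma transpose_diag_mat: "transpose (diag_mat f) = diag_mat f"
  by (simp add: diag_mat_def transpose_def vec_eq_iff)

definition lyap_matrix :: "('n::finite \<Rightarrow> 'p) \<Rightarrow> ('n \<Rightarrow> nat) \<Rightarrow> real \<Rightarrow> nat \<Rightarrow> real^'n^'n" where
  "lyap_matrix blk pos R T = diag_mat (\<lambda>k. lyap_weight R T (2 * pos k - 1))
     - (diag_mat (\<lambda>k. lyap_weight R T (2 * pos k)) ** Abar blk pos
        + transpose (Abar blk pos) ** diag_mat (\<lambda>k. lyap_weight R T (2 * pos k)))"

lemma inner_lyap_matrix: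
  "v \<bullet> (lyap_matrix blk pos R T *v w) = (\<Sum>k\<in>UNIV. lyap_weight R T (2 * pos k - 1) * v$k * w$k)
     - (\<Sum>k\<in>UNIV. lyap_weight R T (2 * pos k) * v$k * (Abar blk pos *v w)$k)
     - (\<Sum>k\<in>UNIV. lyap_weight R T (2 * pos k) * (Abar blk pos *v v)$k * w$k)"
proof -
  let ?A = "Abar blk pos" and ?a = "diag_mat (\<lambda>k. lyap_weight R T (2 * pos k - 1))"
    and ?b = "diag_mat (\<lambda>k. lyap_weight R T (2 * pos k))"
  have "v \<bullet> (lyap_matrix blk pos R T *v w)
      = v \<bullet> (?a *v w) - v \<bullet> (?b *v (?A *v w)) - v \<bullet> (transpose ?A *v (?b *v w))"
    unfolding lyap_matrix_def
    by (simp add: matrix_vector_mult_diff_rdistrib matrix_vector_mult_add_rdistrib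
        matrix_vector_mul_assoc inner_diff_right inner_add_right)
  also have "v \<bullet> (transpose ?A *v (?b *v w)) = (?A *v v) \<bullet> (?b *v w)"
    by (metis inner_matrix_vector_transpose transpose_transpose)
  finally show ?thesis by (simp add: inner_vec_def diag_mat_vector_mult mult_ac)
qed

lemma lyap_matrix_symmetric: "transpose (lyap_matrix blk pos R T) = lyap_matrix blk pos R T"
  unfolding lyap_matrix_def
  by (simp add: transpose_diff transpose_add matrix_transpose_mul transpose_diag_mat add.commute)

lemma lyap_coordinate_lower:
  fixes R a b a1 x y :: real
  assumes R: "0 < R" and nonneg: "0 \<le> a" "0 \<le> a1" and gain: "R\<^sup>2 * b\<^sup>2 \<le> a * a1"
  shows "(a / 2) * x\<^sup>2 - (2 * a1 / R\<^sup>2) * y\<^sup>2 \<le> a * x * x - b * x * y - b * y * x"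
proof -
  have "b\<^sup>2 \<le> (a / 2) * (2 * a1 / R\<^sup>2)" using gain R by (simp add: field_simps power2_eq_square)
  then have "\<bar>b * x * y\<bar> \<le> ((a / 2) * x\<^sup>2 + (2 * a1 / R\<^sup>2) * y\<^sup>2) / 2"
    by (rule weighted_young[rotated 2]) (use nonneg in auto)
  then show ?thesis by (simp add: power2_eq_square algebra_simps)
qed

lemma lyap_coordinate_upper:
  fixes R a b g b1 x y z p q :: real
  assumes R: "0 < R" and nonneg: "0 \<le> b" "0 \<le> g" "0 \<le> b1"
    and gain_a: "R\<^sup>2 * a\<^sup>2 \<le> g * b" and gain_b: "R\<^sup>2 * b\<^sup>2 \<le> g * b1"
  shows "a * x * (y + z) - b * x * (p + q) - b * y * (y + z)
    \<le> (2 * g / R) * x\<^sup>2 + (b / R) * y\<^sup>2 + (b / (2 * R)) * z\<^sup>2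
       + (b1 / (2 * R)) * (p\<^sup>2 + q\<^sup>2) + (R * b / 2) * z\<^sup>2 - b * y\<^sup>2"
proof -
  have ga: "a\<^sup>2 \<le> (g / R) * (b / R)" using gain_a R by (simp add: field_simps power2_eq_square)
  have gb: "b\<^sup>2 \<le> (g / R) * (b1 / R)" using gain_b R by (simp add: field_simps power2_eq_square)
  have bb: "b\<^sup>2 \<le> (b / R) * (R * b)" using R by (simp add: power2_eq_square)
  have nn: "0 \<le> g / R" "0 \<le> b / R" "0 \<le> b1 / R" "0 \<le> R * b" using nonneg R by auto
  have "\<bar>a * x * y\<bar> \<le> ((g / R) * x\<^sup>2 + (b / R) * y\<^sup>2) / 2"
    and "\<bar>a * x * z\<bar> \<le> ((g / R) * x\<^sup>2 + (b / R) * z\<^sup>2) / 2"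
    and "\<bar>b * x * p\<bar> \<le> ((g / R) * x\<^sup>2 + (b1 / R) * p\<^sup>2) / 2"
    and "\<bar>b * x * q\<bar> \<le> ((g / R) * x\<^sup>2 + (b1 / R) * q\<^sup>2) / 2"
    and "\<bar>b * y * z\<bar> \<le> ((b / R) * y\<^sup>2 + (R * b) * z\<^sup>2) / 2"
    using weighted_young[OF nn(1,2) ga] weighted_young[OF nn(1,3) gb] weighted_young[OF nn(2,4) bb]
    by blast+
  moreover have "(2 * g / R) * x\<^sup>2 + (b / R) * y\<^sup>2 + (b / (2 * R)) * z\<^sup>2 + (b1 / (2 * R)) * (p\<^sup>2 + q\<^sup>2)
      + (R * b / 2) * z\<^sup>2 - b * y\<^sup>2
    = ((g / R) * x\<^sup>2 + (b / R) * y\<^sup>2) / 2 + ((g / R) * x\<^sup>2 + (b / R) * z\<^sup>2) / 2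
      + ((g / R) * x\<^sup>2 + (b1 / R) * p\<^sup>2) / 2 + ((g / R) * x\<^sup>2 + (b1 / R) * q\<^sup>2) / 2
      + ((b / R) * y\<^sup>2 + (R * b) * z\<^sup>2) / 2 - b * y\<^sup>2"
    using R by (simp add: field_simps)
  moreover have "a * x * (y + z) - b * x * (p + q) - b * y * (y + z)
      = a * x * y + a * x * z - b * x * p - b * x * q - b * y * z - b * y\<^sup>2"
    by (simp add: algebra_simps power2_eq_square)
  ultimately show ?thesis by (smt (verit) abs_ge_self abs_minus_cancel abs_le_iff)
qed

locale lyapunov_weights =
  fixes l :: "'p::{finite,linorder} \<Rightarrow> nat" and blk :: "'n::finite \<Rightarrow> 'p" and pos :: "'n \<Rightarrow> nat"
    and L R :: real and T :: nat
  assumes coords: "obs_coords l blk pos" and L_nonneg: "0 \<le> L"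
    and R_def: "R = 7 + 3 * L\<^sup>2 * CARD('n)" and T_def: "T = 2 * CARD('n) + 2"
begin

abbreviation "c \<equiv> lyap_weight R T"

definition "a k = c (2 * pos k - 1)"
definition "b k = c (2 * pos k)"
definition "g k = c (2 * (pos k - 1))"
definition "a1 k = c (2 * pos k + 1)"
definition "b1 k = c (2 * pos k + 2)"

definition "S = lyap_matrix blk pos R T"

lemma R_ge_7: "7 \<le> R"
  using L_nonneg by (simp add: R_def)

lemma weights_ge_1: "1 \<le> a k" "1 \<le> b k" "1 \<le> g k" "1 \<le> a1 k" "1 \<le> b1 k"
  using lyap_weight_ge_1 R_ge_7 by (simp_all add: a_def b_def g_def a1_def b1_def)

lemma weights_nonneg: "0 \<le> a k" "0 \<le> b k" "0 \<le> g k" "0 \<le> a1 k" "0 \<le> b1 k"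
  using weights_ge_1 order_trans zero_le_one by blast+

lemma pos_range: "1 \<le> pos k" "2 * pos k + 2 \<le> T"
  using obs_coords_pos_ge_1[OF coords] obs_coords_pos_le_card[OF coords, of k] by (auto simp: T_def)

lemma gain_a: "R\<^sup>2 * (a k)\<^sup>2 \<le> g k * b k"
proof -
  have "c (2 * pos k - 1 - 1) * c (2 * pos k - 1 + 1) = R\<^sup>2 * (c (2 * pos k - 1))\<^sup>2"
    by (rule lyap_weight_log_concave) (use pos_range[of k] in auto)
  moreover have "2 * pos k - 1 - 1 = 2 * (pos k - 1)" "2 * pos k - 1 + 1 = 2 * pos k"
    using pos_range[of k] by auto
  ultimately show ?thesis by (simp add: a_def b_def g_def)
qed

lemma gain_b: "R\<^sup>2 * (b k)\<^sup>2 \<le> a k * a1 k"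
  using lyap_weight_log_concave[of "2 * pos k" T R] pos_range[of k] by (simp add: a_def b_def a1_def)

lemma gain_b2: "R\<^sup>2 * (b k)\<^sup>2 \<le> g k * b1 k"
  using lyap_weight_log_concave2[of "2 * pos k" T R] pos_range[of k] R_ge_7
  by (simp add: b_def g_def b1_def right_diff_distrib')

lemma gain_b_g: "R\<^sup>2 * b k \<le> g k"
  using lyap_weight_step2[of "2 * pos k" T R] pos_range[of k] R_ge_7
  by (simp add: b_def g_def right_diff_distrib')

lemma norm_le_sum_g: "(norm v)\<^sup>2 \<le> (\<Sum>k\<in>UNIV. g k * (v$k)\<^sup>2)"
  unfolding norm_vec_power2 by (intro sum_mono) (use weights_ge_1 in \<open>simp add: mult_le_cancel_right1\<close>)

text \<open>The output term c(0) |C v|^2 supplies exactly the first coordinates missing from the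
  shifted sum.\<close>
lemma sum_b_Abar_plus_Cbar:
  "(\<Sum>k\<in>UNIV. b k * ((Abar blk pos *v v)$k)\<^sup>2) + c 0 * (norm (Cbar blk pos *v v))\<^sup>2
    = (\<Sum>k\<in>UNIV. g k * (v$k)\<^sup>2)"
proof -
  have "(\<Sum>k\<in>UNIV. b k * ((Abar blk pos *v v)$k)\<^sup>2)
      = (\<Sum>k\<in>UNIV. (if 2 \<le> pos k then g k else 0) * (v$k)\<^sup>2)"
    unfolding b_def g_def by (rule weighted_sum_Abar_power2[OF coords, where w="\<lambda>j. c (2 * j)"])
  moreover have "c 0 * (norm (Cbar blk pos *v v))\<^sup>2
      = (\<Sum>k\<in>UNIV. (if pos k = 1 then g k else 0) * (v$k)\<^sup>2)"
    unfolding norm_Cbar_power2[OF coords] sum_distrib_left by (intro sum.cong) (auto simp: g_def)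
  moreover have "(if 2 \<le> pos k then g k else 0) + (if pos k = 1 then g k else 0) = g k" for k
    using pos_range(1)[of k] by auto
  ultimately show ?thesis by (simp add: sum.distrib[symmetric] distrib_right[symmetric])
qed

lemma sum_b1_Abar_le: "(\<Sum>k\<in>UNIV. b1 k * ((Abar blk pos *v x)$k)\<^sup>2) \<le> (\<Sum>k\<in>UNIV. b k * (x$k)\<^sup>2)"
proof -
  have "(\<Sum>k\<in>UNIV. b1 k * ((Abar blk pos *v x)$k)\<^sup>2)
      = (\<Sum>k\<in>UNIV. (if 2 \<le> pos k then c (2 * (pos k - 1) + 2) else 0) * (x$k)\<^sup>2)"
    using weighted_sum_Abar_power2[OF coords, where w="\<lambda>j. c (2 * j + 2)"] by (simp add: b1_def)
  also have "\<dots> \<le> (\<Sum>k\<in>UNIV. b k * (x$k)\<^sup>2)"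
  proof (intro sum_mono)
    fix k
    have "2 \<le> pos k \<Longrightarrow> 2 * (pos k - 1) + 2 = 2 * pos k" by simp
    then show "(if 2 \<le> pos k then c (2 * (pos k - 1) + 2) else 0) * (x$k)\<^sup>2 \<le> b k * (x$k)\<^sup>2"
      using weights_nonneg(2)[of k] by (auto simp: b_def simp del: add_2_eq_Suc add_2_eq_Suc')
  qed
  finally show ?thesis .
qed

lemma sum_a1_Abar_le: "(\<Sum>k\<in>UNIV. a1 k * ((Abar blk pos *v x)$k)\<^sup>2) \<le> (\<Sum>k\<in>UNIV. a k * (x$k)\<^sup>2)"
proof -
  have "(\<Sum>k\<in>UNIV. a1 k * ((Abar blk pos *v x)$k)\<^sup>2)
      = (\<Sum>k\<in>UNIV. (if 2 \<le> pos k then c (2 * (pos k - 1) + 1) else 0) * (x$k)\<^sup>2)"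
    using weighted_sum_Abar_power2[OF coords, where w="\<lambda>j. c (2 * j + 1)"] by (simp add: a1_def)
  also have "\<dots> \<le> (\<Sum>k\<in>UNIV. a k * (x$k)\<^sup>2)"
  proof (intro sum_mono)
    fix k
    have "2 \<le> pos k \<Longrightarrow> 2 * (pos k - 1) + 1 = 2 * pos k - 1" by simp
    then show "(if 2 \<le> pos k then c (2 * (pos k - 1) + 1) else 0) * (x$k)\<^sup>2 \<le> a k * (x$k)\<^sup>2"
      using weights_nonneg(1)[of k] by (auto simp: a_def)
  qed
  finally show ?thesis .
qed

lemma sum_b_le_sum_g: "(\<Sum>k\<in>UNIV. b k * (v$k)\<^sup>2) \<le> (\<Sum>k\<in>UNIV. g k * (v$k)\<^sup>2) / R\<^sup>2"
proof -
  have "(\<Sum>k\<in>UNIV. b k * (v$k)\<^sup>2) \<le> (\<Sum>k\<in>UNIV. (g k / R\<^sup>2) * (v$k)\<^sup>2)"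
    using gain_b_g R_ge_7 by (intro sum_mono mult_right_mono) (auto simp: field_simps mult.commute)
  then show ?thesis by (simp add: sum_divide_distrib)
qed

lemma sum_b_lower_triangular_le:
  assumes \<phi>: "\<And>k. \<bar>\<phi>$k\<bar> \<le> L * sub_dist pos (pos k) v 0"
  shows "(\<Sum>k\<in>UNIV. b k * (\<phi>$k)\<^sup>2) \<le> L\<^sup>2 * CARD('n) * (\<Sum>k\<in>UNIV. g k * (v$k)\<^sup>2) / R\<^sup>2"
proof -
  have "(\<phi>$k)\<^sup>2 \<le> L\<^sup>2 * (sub_dist pos (pos k) v 0)\<^sup>2" for k
  proof -
    have "\<bar>\<phi>$k\<bar>\<^sup>2 \<le> (L * sub_dist pos (pos k) v 0)\<^sup>2" by (rule power_mono[OF \<phi>]) simp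
    then show ?thesis by (simp add: power_mult_distrib)
  qed
  then have "(\<Sum>k\<in>UNIV. b k * (\<phi>$k)\<^sup>2) \<le> L\<^sup>2 * (\<Sum>k\<in>UNIV. b k * (sub_dist pos (pos k) v 0)\<^sup>2)"
    unfolding sum_distrib_left
    by (intro sum_mono) (metis mult.left_commute mult_left_mono weights_nonneg(2))
  also have "\<dots> \<le> L\<^sup>2 * (CARD('n) * (\<Sum>k\<in>UNIV. b k * (v$k)\<^sup>2))"
    unfolding b_def using R_ge_7 lyap_weight_antimono lyap_weight_ge_1
    by (intro mult_left_mono weighted_sum_sub_dist_power2_le[where w="\<lambda>j. c (2 * j)", simplified])
      (auto intro: order_trans[OF zero_le_one])
  also have "\<dots> \<le> L\<^sup>2 * (CARD('n) * ((\<Sum>k\<in>UNIV. g k * (v$k)\<^sup>2) / R\<^sup>2))"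
    by (intro mult_left_mono sum_b_le_sum_g) auto
  finally show ?thesis by simp
qed

lemma S_symmetric: "transpose S = S"
  by (simp add: S_def lyap_matrix_symmetric)

lemma inner_S:
  "v \<bullet> (S *v w) = (\<Sum>k\<in>UNIV. a k * v$k * w$k - b k * v$k * (Abar blk pos *v w)$k
     - b k * (Abar blk pos *v v)$k * w$k)"
  unfolding S_def inner_lyap_matrix a_def b_def by (simp only: sum_subtractf)

lemma S_lower: "(norm v)\<^sup>2 / 4 \<le> v \<bullet> (S *v v)"
proof -
  define u where "u = Abar blk pos *v v"
  have R: "0 < R" using R_ge_7 by simp
  have "(\<Sum>k\<in>UNIV. (a k / 2) * (v$k)\<^sup>2 - (2 * a1 k / R\<^sup>2) * (u$k)\<^sup>2) \<le> v \<bullet> (S *v v)"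
    unfolding inner_S u_def[symmetric]
    by (intro sum_mono lyap_coordinate_lower[OF R] weights_nonneg gain_b)
  then have "(\<Sum>k\<in>UNIV. a k * (v$k)\<^sup>2) / 2 - (2 / R\<^sup>2) * (\<Sum>k\<in>UNIV. a1 k * (u$k)\<^sup>2) \<le> v \<bullet> (S *v v)"
    by (simp add: sum_subtractf sum_divide_distrib sum_distrib_left mult.assoc)
  moreover have "(2 / R\<^sup>2) * (\<Sum>k\<in>UNIV. a1 k * (u$k)\<^sup>2) \<le> (1 / 4) * (\<Sum>k\<in>UNIV. a k * (v$k)\<^sup>2)"
  proof (rule mult_mono)
    have "7 * 7 \<le> R * R" using R_ge_7 by (intro mult_mono) auto
    then show "2 / R\<^sup>2 \<le> 1 / 4" using R by (simp add: field_simps power2_eq_square)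
  qed (use sum_a1_Abar_le[of v] weights_nonneg in \<open>auto simp: u_def intro: sum_nonneg\<close>)
  moreover have "(norm v)\<^sup>2 \<le> (\<Sum>k\<in>UNIV. a k * (v$k)\<^sup>2)"
    unfolding norm_vec_power2 by (intro sum_mono) (use weights_ge_1 in \<open>simp add: mult_le_cancel_right1\<close>)
  ultimately show ?thesis by linarith
qed

lemma inner_S_Abar_le:
  "v \<bullet> (S *v (Abar blk pos *v v + \<phi>)) \<le>
     (2 / R) * (\<Sum>k\<in>UNIV. g k * (v$k)\<^sup>2) + (1 / R - 1) * (\<Sum>k\<in>UNIV. b k * ((Abar blk pos *v v)$k)\<^sup>2)
     + (1 / R + R / 2) * (\<Sum>k\<in>UNIV. b k * (\<phi>$k)\<^sup>2)
     + (1 / (2 * R)) * (\<Sum>k\<in>UNIV. b k * ((Abar blk pos *v v)$k)\<^sup>2)"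
proof -
  define u where "u = Abar blk pos *v v"
  define z where "z = Abar blk pos *v u"
  define \<psi> where "\<psi> = Abar blk pos *v \<phi>"
  have R: "0 < R" using R_ge_7 by simp
  have "Abar blk pos *v (u + \<phi>) = z + \<psi>" by (simp add: z_def \<psi>_def matrix_vector_right_distrib)
  then have "v \<bullet> (S *v (u + \<phi>)) =
      (\<Sum>k\<in>UNIV. a k * v$k * (u$k + \<phi>$k) - b k * v$k * (z$k + \<psi>$k) - b k * u$k * (u$k + \<phi>$k))"
    unfolding inner_S u_def[symmetric] by simp
  also have "\<dots> \<le> (\<Sum>k\<in>UNIV. (2 * g k / R) * (v$k)\<^sup>2 + (b k / R) * (u$k)\<^sup>2 + (b k / (2 * R)) * (\<phi>$k)\<^sup>2
      + (b1 k / (2 * R)) * ((z$k)\<^sup>2 + (\<psi>$k)\<^sup>2) + (R * b k / 2) * (\<phi>$k)\<^sup>2 - b k * (u$k)\<^sup>2)"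
    by (intro sum_mono lyap_coordinate_upper[OF R] weights_nonneg gain_a gain_b2)
  also have "\<dots> = (2 / R) * (\<Sum>k\<in>UNIV. g k * (v$k)\<^sup>2) + (1 / R - 1) * (\<Sum>k\<in>UNIV. b k * (u$k)\<^sup>2)
      + (1 / (2 * R) + R / 2) * (\<Sum>k\<in>UNIV. b k * (\<phi>$k)\<^sup>2)
      + (1 / (2 * R)) * (\<Sum>k\<in>UNIV. b1 k * (z$k)\<^sup>2) + (1 / (2 * R)) * (\<Sum>k\<in>UNIV. b1 k * (\<psi>$k)\<^sup>2)"
    by (simp add: sum.distrib sum_subtractf sum_distrib_left algebra_simps sum_divide_distrib)
  also have "\<dots> \<le> (2 / R) * (\<Sum>k\<in>UNIV. g k * (v$k)\<^sup>2) + (1 / R - 1) * (\<Sum>k\<in>UNIV. b k * (u$k)\<^sup>2)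
      + (1 / (2 * R) + R / 2) * (\<Sum>k\<in>UNIV. b k * (\<phi>$k)\<^sup>2)
      + (1 / (2 * R)) * (\<Sum>k\<in>UNIV. b k * (u$k)\<^sup>2) + (1 / (2 * R)) * (\<Sum>k\<in>UNIV. b k * (\<phi>$k)\<^sup>2)"
    unfolding z_def \<psi>_def using R by (intro add_mono mult_left_mono sum_b1_Abar_le order_refl) auto
  finally show ?thesis by (simp add: u_def algebra_simps)
qed

lemma S_dissipation:
  assumes \<phi>: "\<And>k. \<bar>\<phi>$k\<bar> \<le> L * sub_dist pos (pos k) v 0"
  shows "v \<bullet> (S *v (Abar blk pos *v v + \<phi>)) \<le> c 0 * (norm (Cbar blk pos *v v))\<^sup>2 - (norm v)\<^sup>2 / 2"
proof -
  define G where "G = (\<Sum>k\<in>UNIV. g k * (v$k)\<^sup>2)"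
  define Bu where "Bu = (\<Sum>k\<in>UNIV. b k * ((Abar blk pos *v v)$k)\<^sup>2)"
  define B\<phi> where "B\<phi> = (\<Sum>k\<in>UNIV. b k * (\<phi>$k)\<^sup>2)"
  have R: "7 \<le> R" "0 < R" using R_ge_7 by auto
  have Cv: "c 0 * (norm (Cbar blk pos *v v))\<^sup>2 = G - Bu"
    using sum_b_Abar_plus_Cbar[of v] by (simp add: G_def Bu_def)
  have Bu: "0 \<le> Bu" "Bu \<le> G"
    using Cv weights_nonneg lyap_weight_ge_1[of R T 0] R unfolding Bu_def
    by (auto intro!: sum_nonneg) (smt (verit) mult_nonneg_nonneg zero_le_power2)
  have B\<phi>: "0 \<le> B\<phi>" "R\<^sup>2 * B\<phi> \<le> L\<^sup>2 * CARD('n) * G"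
    using sum_b_lower_triangular_le[OF \<phi>] weights_nonneg R unfolding B\<phi>_def G_def
    by (auto intro!: sum_nonneg simp: field_simps)
  have "v \<bullet> (S *v (Abar blk pos *v v + \<phi>)) \<le> (2 / R) * G + (1 / R - 1) * Bu + (1 / R + R / 2) * B\<phi>
      + (1 / (2 * R)) * Bu"
    unfolding G_def Bu_def B\<phi>_def by (rule inner_S_Abar_le)
  \<comment> \<open>R = 7 + 3 L^2 n is chosen so that the terms in G add up to at most G / 2\<close>
  also have "\<dots> \<le> G / 2 - Bu"
  proof -
    have "(1 / R + R / 2) * B\<phi> \<le> (3 / (2 * R)) * (L\<^sup>2 * CARD('n) * G)"
    proof -
      have "(1 / R + R / 2) * B\<phi> = (1 / R ^ 3 + 1 / (2 * R)) * (R\<^sup>2 * B\<phi>)"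
        using R by (simp add: field_simps power2_eq_square power3_eq_cube)
      also have "\<dots> \<le> (1 / R ^ 3 + 1 / (2 * R)) * (L\<^sup>2 * CARD('n) * G)"
        using B\<phi> R by (intro mult_left_mono) auto
      also have "\<dots> \<le> (3 / (2 * R)) * (L\<^sup>2 * CARD('n) * G)"
      proof (rule mult_right_mono)
        have "R \<le> R ^ 3" using R by (simp add: power3_eq_cube) (smt (verit) mult_le_cancel_left1 mult_mono)
        then show "1 / R ^ 3 + 1 / (2 * R) \<le> 3 / (2 * R)" using R by (simp add: field_simps)
        show "0 \<le> L\<^sup>2 * CARD('n) * G" using Bu by simp
      qed
      finally show ?thesis .
    qed
    moreover have "(2 / R) * G + (1 / R - 1) * Bu + (1 / (2 * R)) * Bu \<le> (7 / (2 * R)) * G - Bu"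
      using Bu R by (simp add: field_simps)
    moreover have "(7 / (2 * R)) * G + (3 / (2 * R)) * (L\<^sup>2 * CARD('n) * G) = R * G / (2 * R)"
      by (simp add: R_def add_divide_distrib ring_distribs)
    moreover have "R * G / (2 * R) = G / 2" using R by simp
    ultimately show ?thesis by linarith
  qed
  also have "\<dots> \<le> c 0 * (norm (Cbar blk pos *v v))\<^sup>2 - (norm v)\<^sup>2 / 2"
    using Cv norm_le_sum_g[of v] by (simp add: G_def)
  finally show ?thesis .
qed

end

section \<open>Derivatives of the nonlinearity\<close>

lemma has_derivative_slice:
  assumes "\<And>z. z \<in> UNIV \<times> U \<Longrightarrow> (g has_derivative D z) (at z within UNIV \<times> U)" and "v \<in> U"
  shows "((\<lambda>\<xi>. g (\<xi>, v)) has_derivative (\<lambda>h. D (x, v) (h, 0))) (at x)"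
proof -
  have p: "((\<lambda>\<xi>. (\<xi>, v)) has_derivative (\<lambda>h. (h, 0))) (at x within UNIV)"
    by (auto intro!: derivative_eq_intros)
  have "((\<lambda>\<xi>. g (\<xi>, v)) has_derivative (\<lambda>h. D (x, v) (h, 0))) (at x within UNIV)"
    by (rule has_derivative_in_compose2[OF assms(1) _ _ p]) (use assms(2) in auto)
  then show ?thesis by simp
qed

lemma abs_derivative_le_of_lipschitz:
  fixes \<phi> :: "real \<Rightarrow> real"
  assumes "(\<phi> has_real_derivative D) (at 0)" and "\<And>s. \<bar>\<phi> s - \<phi> 0\<bar> \<le> \<bar>s\<bar> * C"
  shows "\<bar>D\<bar> \<le> C"
proof (rule tendsto_upperbound[OF tendsto_rabs])
  show "((\<lambda>s. (\<phi> (0 + s) - \<phi> 0) / s) \<longlongrightarrow> D) (at 0)"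
    using assms(1) unfolding DERIV_def .
  show "\<forall>\<^sub>F s in at 0. \<bar>(\<phi> (0 + s) - \<phi> 0) / s\<bar> \<le> C"
    unfolding eventually_at_filter
    using assms(2) by (intro always_eventually allI impI) (simp add: abs_divide divide_le_eq mult.commute)
qed simp

context
  fixes U :: "(real^'m) set" and fb :: "real^'n \<Rightarrow> real^'m \<Rightarrow> real^'n"
    and D1 :: "(real^'n) \<times> (real^'m) \<Rightarrow> ((real^'n) \<times> (real^'m)) \<Rightarrow>\<^sub>L (real^'n)"
    and D2 :: "(real^'n) \<times> (real^'m) \<Rightarrow> ((real^'n) \<times> (real^'m)) \<Rightarrow>\<^sub>L ((real^'n) \<times> (real^'m)) \<Rightarrow>\<^sub>L (real^'n)"
  assumes C2: "has_C2_derivs (UNIV \<times> U) (\<lambda>z. fb (fst z) (snd z)) D1 D2"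
begin

lemma has_derivative_fb: "v \<in> U \<Longrightarrow> ((\<lambda>\<xi>. fb \<xi> v) has_derivative (\<lambda>h. D1 (x, v) (h, 0))) (at x)"
  using has_derivative_slice[of U "\<lambda>z. fb (fst z) (snd z)" "\<lambda>z. blinfun_apply (D1 z)"] C2
  unfolding has_C2_derivs_def by simp

lemma has_derivative_D1: "v \<in> U \<Longrightarrow> ((\<lambda>\<xi>. D1 (\<xi>, v)) has_derivative (\<lambda>h. D2 (x, v) (h, 0))) (at x)"
  using has_derivative_slice[of U D1 "\<lambda>z. blinfun_apply (D2 z)"] C2
  unfolding has_C2_derivs_def by simp

lemma D1_lower_triangular:
  assumes v: "v \<in> U"
    and lip: "\<And>x \<xi>. \<bar>fb x v $ k - fb \<xi> v $ k\<bar> \<le> L * sub_dist pos (pos k) x \<xi>"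
  shows "\<bar>D1 (x, v) (w, 0) $ k\<bar> \<le> L * sub_dist pos (pos k) w 0"
proof (rule abs_derivative_le_of_lipschitz)
  have line: "((\<lambda>s. x + s *\<^sub>R w) has_derivative (\<lambda>s. s *\<^sub>R w)) (at 0)"
    by (auto intro!: derivative_eq_intros)
  have "((\<lambda>s. fb (x + s *\<^sub>R w) v) has_derivative (\<lambda>s. D1 (x, v) (s *\<^sub>R w, 0))) (at 0)"
    using has_derivative_compose[OF line has_derivative_fb[OF v, of "x + 0 *\<^sub>R w"]] by (simp add: o_def)
  then have "((\<lambda>s. fb (x + s *\<^sub>R w) v $ k) has_derivative (\<lambda>s. D1 (x, v) (s *\<^sub>R w, 0) $ k)) (at 0)"
    by (rule bounded_linear.has_derivative[OF bounded_linear_vec_nth])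
  moreover have "D1 (x, v) (s *\<^sub>R w, 0) $ k = s * (D1 (x, v) (w, 0) $ k)" for s
  proof -
    have eq: "(s *\<^sub>R w, 0::real^'m) = s *\<^sub>R (w, 0)" by simp
    show ?thesis unfolding eq blinfun.scaleR_right vector_scaleR_component by simp
  qed
  ultimately show "((\<lambda>s. fb (x + s *\<^sub>R w) v $ k) has_real_derivative (D1 (x, v) (w, 0) $ k)) (at 0)"
    by (simp add: has_field_derivative_def mult_commute_abs)
  show "\<bar>fb (x + s *\<^sub>R w) v $ k - fb (x + 0 *\<^sub>R w) v $ k\<bar> \<le> \<bar>s\<bar> * (L * sub_dist pos (pos k) w 0)" for s
    using lip[of "x + s *\<^sub>R w" x] by (simp add: sub_dist_translate_scale mult_ac)
qed

lemma linearization_error_le: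
  assumes v: "v \<in> U" and second: "\<And>x \<xi>. norm (D2 (x, v) (\<xi>, 0) (\<xi>, 0)) \<le> L * (norm \<xi>)\<^sup>2"
  shows "norm (fb y v - fb x v - D1 (x, v) (y - x, 0)) \<le> L * (norm (y - x))\<^sup>2"
proof -
  define e where "e = y - x"
  define \<eta> where "\<eta> s = D1 (x + s *\<^sub>R e, v) (e, 0)" for s :: real
  define \<eta>' where "\<eta>' s = D2 (x + s *\<^sub>R e, v) (e, 0) (e, 0)" for s :: real
  define \<psi> where "\<psi> = (\<lambda>s::real. fb (x + s *\<^sub>R e) v)"
  have line: "((\<lambda>s. x + s *\<^sub>R e) has_derivative (\<lambda>s. s *\<^sub>R e)) (at s)" for s
    by (auto intro!: derivative_eq_intros)
  have scale: "(s *\<^sub>R e, 0::real^'m) = s *\<^sub>R (e, 0)" for s by simp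
  have d\<psi>: "(\<psi> has_vector_derivative \<eta> s) (at s)" for s
  proof -
    have "(\<psi> has_derivative (\<lambda>t. D1 (x + s *\<^sub>R e, v) (t *\<^sub>R e, 0))) (at s)"
      using has_derivative_compose[OF line has_derivative_fb[OF v]] by (simp add: o_def \<psi>_def)
    then show ?thesis unfolding has_vector_derivative_def \<eta>_def scale blinfun.scaleR_right .
  qed
  have d\<eta>: "(\<eta> has_vector_derivative \<eta>' s) (at s)" for s
  proof -
    have "((\<lambda>t. D1 (x + t *\<^sub>R e, v)) has_derivative (\<lambda>t. D2 (x + s *\<^sub>R e, v) (t *\<^sub>R e, 0))) (at s)"
      using has_derivative_compose[OF line has_derivative_D1[OF v]] by (simp add: o_def)
    then have "((\<lambda>t. D1 (x + t *\<^sub>R e, v) (e, 0)) has_derivative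
        (\<lambda>t. D2 (x + s *\<^sub>R e, v) (t *\<^sub>R e, 0) (e, 0))) (at s)"
      by (rule bounded_linear.has_derivative[OF
            bounded_bilinear.bounded_linear_left[OF bounded_bilinear_blinfun_apply]])
    then show ?thesis
      unfolding has_vector_derivative_def \<eta>_def \<eta>'_def scale blinfun.scaleR_right blinfun.scaleR_left .
  qed
  have "norm (\<eta> s - \<eta> 0) \<le> L * (norm e)\<^sup>2" if "s \<in> {0..1}" for s
  proof -
    have "norm (\<eta> s - \<eta> 0) \<le> L * (norm e)\<^sup>2 * norm (s - 0)"
    proof (rule differentiable_bound[where S=UNIV])
      show "(\<eta> has_derivative (\<lambda>h. h *\<^sub>R \<eta>' t)) (at t within UNIV)" for t
        using d\<eta> unfolding has_vector_derivative_def by simp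
      show "onorm (\<lambda>h. h *\<^sub>R \<eta>' t) \<le> L * (norm e)\<^sup>2" for t
        using second[of "x + t *\<^sub>R e" e] by (simp add: onorm_scaleR_left onorm_id \<eta>'_def)
    qed auto
    also have "\<dots> \<le> L * (norm e)\<^sup>2"
    proof (rule mult_left_le)
      show "0 \<le> L * (norm e)\<^sup>2" using second[of x e] by (meson norm_ge_zero order_trans)
    qed (use that in auto)
    finally show ?thesis .
  qed
  then have "norm (\<psi> 1 - \<psi> 0 - (1 - 0) *\<^sub>R \<eta> 0) \<le> norm (1 - 0::real) * (L * (norm e)\<^sup>2)"
    using d\<psi> by (intro vector_differentiable_bound_linearization[where S="{0..1}"])
      (auto intro: has_vector_derivative_at_within simp: closed_segment_eq_real_ivl)
  then show ?thesis by (simp add: \<psi>_def \<eta>_def e_def)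
qed

end

lemma matrix_frechet_derivative_affine:
  fixes M :: "real^'n^'m" and \<phi> :: "real^'n \<Rightarrow> real^'m"
  assumes "\<And>x. F x = M *v x + \<phi> x" and "(\<phi> has_derivative \<phi>') (at x)"
  shows "matrix (frechet_derivative F (at x)) *v w = M *v w + \<phi>' w"
proof -
  have "F = (\<lambda>x. M *v x + \<phi> x)" using assms(1) by auto
  moreover have d: "((\<lambda>x. M *v x + \<phi> x) has_derivative (\<lambda>h. M *v h + \<phi>' h)) (at x)"
    by (intro has_derivative_add assms(2) bounded_linear_imp_has_derivative
        matrix_vector_mul_bounded_linear)
  ultimately have "frechet_derivative F (at x) = (\<lambda>h. M *v h + \<phi>' h)"
    by (simp add: frechet_derivative_at[symmetric])
  moreover have "linear (\<lambda>h. M *v h + \<phi>' h)"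
    using has_derivative_bounded_linear[OF d] bounded_linear.linear by blast
  ultimately show ?thesis by (simp add: matrix_works)
qed

section \<open>The extended Kalman filter\<close>

locale ekf_system =
  fixes l :: "'p::{finite,linorder} \<Rightarrow> nat"
    and blk :: "'n::finite \<Rightarrow> 'p" and pos :: "'n \<Rightarrow> nat"
    and U :: "(real^'m::finite) set" and u :: "real \<Rightarrow> real^'m"
    and fb :: "real^'n \<Rightarrow> real^'m \<Rightarrow> real^'n" and hb :: "real^'m \<Rightarrow> (real, 'p) vec"
    and f :: "real^'n \<Rightarrow> real^'m \<Rightarrow> real^'n" and h :: "real^'n \<Rightarrow> real^'m \<Rightarrow> (real, 'p) vec"
    and D1 :: "(real^'n) \<times> (real^'m) \<Rightarrow> ((real^'n) \<times> (real^'m)) \<Rightarrow>\<^sub>L (real^'n)"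
    and D2 :: "(real^'n) \<times> (real^'m) \<Rightarrow> ((real^'n) \<times> (real^'m)) \<Rightarrow>\<^sub>L ((real^'n) \<times> (real^'m)) \<Rightarrow>\<^sub>L (real^'n)"
    and L :: real and G P0 :: "real^'n^'n"
  assumes coords: "obs_coords l blk pos"
    and f_form: "\<And>x v. f x v = Abar blk pos *v x + fb x v"
    and h_form: "\<And>x v. h x v = Cbar blk pos *v x + hb v"
    and fb_lipschitz: "\<And>x \<xi> v k. v \<in> U \<Longrightarrow>
                          \<bar>fb x v $ k - fb \<xi> v $ k\<bar> \<le> L * sub_dist pos (pos k) x \<xi>"
    and fb_C2: "has_C2_derivs (UNIV \<times> U) (\<lambda>z. fb (fst z) (snd z)) D1 D2"
    and fb_second_bound: "\<And>x \<xi> v. v \<in> U \<Longrightarrow> norm (D2 (x, v) (\<xi>, 0) (\<xi>, 0)) \<le> L * (norm \<xi>)\<^sup>2"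
    and u_in_U: "\<And>t. t \<ge> 0 \<Longrightarrow> u t \<in> U"
    and G_inv: "invertible G"
    and P0_pd: "pos_def_mat P0"
begin

abbreviation "Ab \<equiv> Abar blk pos"
abbreviation "Cb \<equiv> Cbar blk pos"

lemma L_nonneg: "0 \<le> L"
  using fb_lipschitz[where v="u 0" and x="axis undefined 1" and \<xi>=0 and k=undefined] u_in_U[of 0]
  by (simp add: sub_dist_axis)

sublocale lyap: lyapunov_weights l blk pos L "7 + 3 * L\<^sup>2 * CARD('n)" "2 * CARD('n) + 2"
  by unfold_locales (simp_all add: coords L_nonneg)

definition "\<Gamma> = G ** transpose G"
definition "\<gamma> = pos_def_lower_bound \<Gamma>"
definition "p0 = pos_def_lower_bound P0"
definition "\<alpha> = norm Ab + sqrt CARD('n) * L"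
definition "\<beta> = (norm Cb)\<^sup>2"

text \<open>Lower bound for P: below it, the noise term \<Gamma> dominates the Riccati equation.\<close>
definition "\<delta> = min (p0 / 2) (min 1 (\<gamma> / (2 * (2 * \<alpha> + \<beta>) + 1)))"

text \<open>Q = P^-1 stays above \<sigma> S, with \<sigma> small enough to beat the quadratic term of the
  Riccati equation for Q and to lie below Q(0).\<close>
definition "\<sigma> = 1 / (2 * lyap.c 0 + norm \<Gamma> * (norm lyap.S)\<^sup>2 + 1 + (norm P0 + 1)\<^sup>2 * (norm lyap.S + 1) / p0)"
definition "\<mu> = \<sigma> / 4"

definition "\<kappa> = \<gamma> * \<mu> / 2"
definition "\<rho> = \<gamma> * \<mu> / (4 * (L + 1))"
definition "\<epsilon> = sqrt (\<delta> * \<mu>) * \<rho>"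

lemma \<Gamma>_symmetric: "transpose \<Gamma> = \<Gamma>"
  by (simp add: \<Gamma>_def matrix_transpose_mul)

lemma inner_\<Gamma>: "w \<bullet> (\<Gamma> *v w) = (norm (transpose G *v w))\<^sup>2"
  by (simp add: \<Gamma>_def matrix_vector_mul_assoc[symmetric] inner_matrix_vector_transpose
      power2_norm_eq_inner)

lemma \<gamma>: "0 < \<gamma>" "\<gamma> * (norm w)\<^sup>2 \<le> w \<bullet> (\<Gamma> *v w)"
proof -
  have pd: "0 < v \<bullet> (\<Gamma> *v v)" if "v \<noteq> 0" for v
  proof -
    have "transpose G *v v \<noteq> 0"
      using that transpose_invertible[OF G_inv] by (metis invertible_def matrix_vector_mul_assoc
          matrix_vector_mul_lid matrix_vector_mult_0_right)
    then show ?thesis by (simp add: inner_\<Gamma>)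
  qed
  show "0 < \<gamma>" "\<gamma> * (norm w)\<^sup>2 \<le> w \<bullet> (\<Gamma> *v w)"
    unfolding \<gamma>_def using pos_def_lower_bound[OF pd] by auto
qed

lemma p0: "0 < p0" "p0 * (norm w)\<^sup>2 \<le> w \<bullet> (P0 *v w)"
  using P0_pd pos_def_lower_bound[of P0] unfolding pos_def_mat_def p0_def by auto

lemma \<alpha>_nonneg: "0 \<le> \<alpha>" by (simp add: \<alpha>_def L_nonneg)

lemma \<beta>_nonneg: "0 \<le> \<beta>" by (simp add: \<beta>_def)

lemma \<delta>: "0 < \<delta>" "\<delta> \<le> p0 / 2" "\<delta> \<le> 1" "\<delta> * (2 * \<alpha> + \<beta>) < \<gamma> / 2"
proof -
  show "0 < \<delta>" using p0 \<gamma> \<alpha>_nonneg \<beta>_nonneg by (simp add: \<delta>_def)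
  show "\<delta> \<le> p0 / 2" "\<delta> \<le> 1" unfolding \<delta>_def by linarith+
  have "\<delta> * (2 * \<alpha> + \<beta>) \<le> \<gamma> / (2 * (2 * \<alpha> + \<beta>) + 1) * (2 * \<alpha> + \<beta>)"
    using \<alpha>_nonneg \<beta>_nonneg by (intro mult_right_mono) (auto simp: \<delta>_def)
  also have "\<dots> < \<gamma> / 2" using \<gamma> \<alpha>_nonneg \<beta>_nonneg by (simp add: field_simps)
  finally show "\<delta> * (2 * \<alpha> + \<beta>) < \<gamma> / 2" .
qed

lemma \<sigma>: "0 < \<sigma>" "2 * \<sigma> * lyap.c 0 < 1" "\<sigma> * (norm \<Gamma> * (norm lyap.S)\<^sup>2) < 1"
  "\<sigma> * (norm lyap.S + 1) * (norm P0 + 1)\<^sup>2 < p0"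
proof -
  define d where "d = 2 * lyap.c 0 + norm \<Gamma> * (norm lyap.S)\<^sup>2 + 1 + (norm P0 + 1)\<^sup>2 * (norm lyap.S + 1) / p0"
  have "1 \<le> lyap.c 0" by (rule lyap_weight_ge_1) (use lyap.R_ge_7 in simp)
  moreover have "0 \<le> (norm P0 + 1)\<^sup>2 * (norm lyap.S + 1) / p0" using p0 by simp
  moreover have "0 \<le> norm \<Gamma> * (norm lyap.S)\<^sup>2" by simp
  ultimately have d: "0 < d" "2 * lyap.c 0 < d" "norm \<Gamma> * (norm lyap.S)\<^sup>2 < d"
    "(norm P0 + 1)\<^sup>2 * (norm lyap.S + 1) / p0 < d"
    unfolding d_def by linarith+
  have \<sigma>d: "\<sigma> = 1 / d" by (simp add: \<sigma>_def d_def)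
  show "0 < \<sigma>" "2 * \<sigma> * lyap.c 0 < 1" "\<sigma> * (norm \<Gamma> * (norm lyap.S)\<^sup>2) < 1"
    using d by (simp_all add: \<sigma>d field_simps)
  show "\<sigma> * (norm lyap.S + 1) * (norm P0 + 1)\<^sup>2 < p0"
    using d p0 by (simp add: \<sigma>d field_simps)
qed

lemma \<mu>_pos: "0 < \<mu>" using \<sigma> by (simp add: \<mu>_def)
lemma \<kappa>_pos: "0 < \<kappa>" using \<gamma> \<mu>_pos by (simp add: \<kappa>_def)
lemma \<rho>_pos: "0 < \<rho>" using \<gamma> \<mu>_pos L_nonneg by (simp add: \<rho>_def)
lemma \<epsilon>_pos: "0 < \<epsilon>" using \<delta> \<mu>_pos \<rho>_pos by (simp add: \<epsilon>_def)

lemma \<sigma>S_lower: "\<mu> * (norm v)\<^sup>2 \<le> v \<bullet> ((\<sigma> *\<^sub>R lyap.S) *v v)"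
  using lyap.S_lower[of v] \<sigma>(1)
  by (simp add: \<mu>_def scaleR_matrix_vector_assoc[symmetric] mult_left_mono)

lemma Jacobian_h: "matrix (frechet_derivative (\<lambda>\<xi>. h \<xi> v) (at z)) = Cb"
  using matrix_frechet_derivative_affine[where F="\<lambda>\<xi>. h \<xi> v" and M=Cb and \<phi>="\<lambda>_. hb v"
      and \<phi>'="\<lambda>_. 0" and x=z] h_form
  by (simp add: matrix_eq)

lemma Jacobian_f: "v \<in> U \<Longrightarrow> matrix (frechet_derivative (\<lambda>\<xi>. f \<xi> v) (at x)) *v w = Ab *v w + D1 (x, v) (w, 0)"
  by (rule matrix_frechet_derivative_affine[OF f_form has_derivative_fb[OF fb_C2]])

lemma D1_sub_dist_bound: "v \<in> U \<Longrightarrow> \<bar>D1 (x, v) (w, 0) $ k\<bar> \<le> L * sub_dist pos (pos k) w 0"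
  by (rule D1_lower_triangular[OF fb_C2 _ fb_lipschitz])

lemma norm_D1: "v \<in> U \<Longrightarrow> norm (D1 (x, v) (w, 0)) \<le> sqrt CARD('n) * L * norm w"
proof -
  assume v: "v \<in> U"
  have "\<bar>D1 (x, v) (w, 0) $ k\<bar> \<le> L * norm w" for k
    using D1_sub_dist_bound[OF v, of x w k] sub_dist_le_norm[of pos "pos k" w] L_nonneg
    by (meson mult_left_mono order_trans)
  then have "(D1 (x, v) (w, 0) $ k)\<^sup>2 \<le> (L * norm w)\<^sup>2" for k
    by (metis abs_ge_zero power2_abs power_mono)
  then have "(norm (D1 (x, v) (w, 0)))\<^sup>2 \<le> (\<Sum>k\<in>(UNIV::'n set). (L * norm w)\<^sup>2)"
    unfolding norm_vec_power2 by (rule sum_mono)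
  also have "\<dots> = (sqrt CARD('n) * L * norm w)\<^sup>2" by (simp add: power_mult_distrib)
  finally show ?thesis by (rule power2_le_imp_le) (simp add: L_nonneg)
qed

lemma norm_Jacobian_f:
  "v \<in> U \<Longrightarrow> norm (matrix (frechet_derivative (\<lambda>\<xi>. f \<xi> v) (at x)) *v w) \<le> \<alpha> * norm w"
proof -
  assume v: "v \<in> U"
  have "norm (Ab *v w + D1 (x, v) (w, 0)) \<le> norm Ab * norm w + sqrt CARD('n) * L * norm w"
    using norm_matrix_vector_mult_le[of Ab w] norm_D1[OF v, of x w] norm_triangle_ineq by (smt (verit))
  then show ?thesis by (simp add: Jacobian_f[OF v] \<alpha>_def algebra_simps)
qed

end

locale ekf_trajectory = ekf_system l blk pos U u fb hb f h D1 D2 L G P0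
  for l :: "'p::{finite,linorder} \<Rightarrow> nat"
    and blk :: "'n::finite \<Rightarrow> 'p" and pos :: "'n \<Rightarrow> nat"
    and U :: "(real^'m::finite) set" and u :: "real \<Rightarrow> real^'m"
    and fb :: "real^'n \<Rightarrow> real^'m \<Rightarrow> real^'n" and hb :: "real^'m \<Rightarrow> (real, 'p) vec"
    and f :: "real^'n \<Rightarrow> real^'m \<Rightarrow> real^'n" and h :: "real^'n \<Rightarrow> real^'m \<Rightarrow> (real, 'p) vec"
    and D1 :: "(real^'n) \<times> (real^'m) \<Rightarrow> ((real^'n) \<times> (real^'m)) \<Rightarrow>\<^sub>L (real^'n)"
    and D2 :: "(real^'n) \<times> (real^'m) \<Rightarrow> ((real^'n) \<times> (real^'m)) \<Rightarrow>\<^sub>L ((real^'n) \<times> (real^'m)) \<Rightarrow>\<^sub>L (real^'n)"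
    and L :: real and G P0 :: "real^'n^'n" +
  fixes x :: "real \<Rightarrow> real^'n" and y :: "real \<Rightarrow> (real, 'p) vec" and xh :: "real \<Rightarrow> real^'n"
    and P :: "real \<Rightarrow> real^'n^'n"
  assumes x_deriv: "\<forall>t\<ge>0. (x has_vector_derivative f (x t) (u t)) (at t within {0..})"
    and y_eq: "\<forall>t\<ge>0. y t = h (x t) (u t)"
    and xh_deriv: "\<forall>t\<ge>0. (xh has_vector_derivative
                       (f (xh t) (u t) + (P t ** transpose (matrix (frechet_derivative (\<lambda>\<xi>. h \<xi> (u t)) (at (xh t)))))
                                          *v (y t - h (xh t) (u t))))
                     (at t within {0..})"
    and P_deriv: "\<forall>t\<ge>0. (P has_vector_derivative
                       (let A = matrix (frechet_derivative (\<lambda>\<xi>. f \<xi> (u t)) (at (xh t)));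
                            C = matrix (frechet_derivative (\<lambda>\<xi>. h \<xi> (u t)) (at (xh t)))
                        in A ** P t + P t ** transpose A + G ** transpose G
                           - P t ** transpose C ** C ** P t))
                     (at t within {0..})"
    and P_init: "P 0 = P0" and error_init: "norm (x 0 - xh 0) < \<epsilon>"
begin

definition "A t = matrix (frechet_derivative (\<lambda>\<xi>. f \<xi> (u t)) (at (xh t)))"
definition "riccati t = A t ** P t + P t ** transpose (A t) + \<Gamma> - P t ** transpose Cb ** Cb ** P t"

lemma has_derivative_P: "0 \<le> t \<Longrightarrow> (P has_vector_derivative riccati t) (at t within {0..})"
  using P_deriv by (simp add: Let_def Jacobian_h riccati_def A_def \<Gamma>_def)

lemma A_apply: "0 \<le> t \<Longrightarrow> A t *v w = Ab *v w + D1 (xh t, u t) (w, 0)"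
  unfolding A_def by (rule Jacobian_f[OF u_in_U])

lemma norm_A_apply: "0 \<le> t \<Longrightarrow> norm (A t *v w) \<le> \<alpha> * norm w"
  unfolding A_def by (rule norm_Jacobian_f[OF u_in_U])

lemma abs_inner_A: "0 \<le> t \<Longrightarrow> \<bar>w \<bullet> (A t *v w)\<bar> \<le> \<alpha> * (norm w)\<^sup>2"
proof -
  assume t: "0 \<le> t"
  have "\<bar>w \<bullet> (A t *v w)\<bar> \<le> norm w * norm (A t *v w)" by (rule Cauchy_Schwarz_ineq2)
  also have "\<dots> \<le> norm w * (\<alpha> * norm w)" by (intro mult_left_mono norm_A_apply[OF t]) simp
  finally show ?thesis by (simp add: power2_eq_square mult_ac)
qed

lemma norm_A: "0 \<le> t \<Longrightarrow> norm (A t) \<le> sqrt CARD('n) * \<alpha>"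
  by (rule norm_matrix_le_of_bound[OF norm_A_apply])

lemma continuous_on_P: "continuous_on {0..} P"
  using has_derivative_P by (rule continuous_on_of_has_derivative_on_atLeast)

lemma norm_riccati_antisymmetric_le:
  assumes s: "0 \<le> s" and B: "norm (P s) \<le> B"
  shows "norm (riccati s - transpose (riccati s))
    \<le> 2 * (sqrt CARD('n) * \<alpha> + norm (transpose Cb ** Cb) * B) * norm (P s - transpose (P s))"
proof -
  define D where "D = P s - transpose (P s)"
  define CC where "CC = transpose Cb ** Cb"
  have "transpose (riccati s) = transpose (P s) ** transpose (A s) + A s ** transpose (P s) + \<Gamma>
      - transpose (P s) ** CC ** transpose (P s)"
    unfolding riccati_def CC_def
    by (simp add: transpose_add transpose_diff matrix_transpose_mul \<Gamma>_symmetric matrix_mul_assoc)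
  then have "riccati s - transpose (riccati s)
      = A s ** D + D ** transpose (A s) - D ** (CC ** P s) - transpose (P s) ** CC ** D"
    unfolding riccati_def D_def CC_def
    by (simp add: matrix_mult_diff_left matrix_mult_diff_right matrix_mul_assoc algebra_simps)
  then have "norm (riccati s - transpose (riccati s)) \<le> norm (A s ** D) + norm (D ** transpose (A s))
      + norm (D ** (CC ** P s)) + norm (transpose (P s) ** CC ** D)"
    by (simp add: norm_diff4_le)
  also have "\<dots> \<le> norm (A s) * norm D + norm D * norm (A s) + norm D * norm CC * norm (P s)
      + norm (P s) * norm CC * norm D"
    using norm_matrix_mult_le[of "A s" D] norm_matrix_mult_le[of D "transpose (A s)"]
      norm_matrix_mult3_le[of D CC "P s"] norm_matrix_mult3_le[of "transpose (P s)" CC D]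
    by (intro add_mono) (simp_all add: norm_transpose matrix_mul_assoc)
  also have "\<dots> = (2 * norm (A s) + 2 * norm CC * norm (P s)) * norm D" by (simp add: algebra_simps)
  also have "\<dots> \<le> (2 * (sqrt CARD('n) * \<alpha>) + 2 * norm CC * B) * norm D"
    using norm_A[OF s] B by (intro mult_right_mono add_mono mult_left_mono) auto
  finally show ?thesis by (simp add: D_def CC_def algebra_simps)
qed

text \<open>The antisymmetric part D = P - transpose P solves a linear equation with D(0) = 0, so it vanishes.\<close>
lemma P_symmetric: "0 \<le> t \<Longrightarrow> transpose (P t) = P t"
proof -
  assume t: "0 \<le> t"
  define D where "D s = P s - transpose (P s)" for s
  define D' where "D' s = riccati s - transpose (riccati s)" for s
  obtain B where B: "\<And>s. s \<in> {0..t} \<Longrightarrow> norm (P s) \<le> B"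
  proof -
    have "compact (P ` {0..t})"
      by (rule compact_continuous_image[OF continuous_on_subset[OF continuous_on_P]]) auto
    then obtain b where "\<forall>z\<in>P ` {0..t}. norm z \<le> b" using compact_imp_bounded bounded_pos by metis
    then show ?thesis using that[of b] by auto
  qed
  define k where "k = sqrt CARD('n) * \<alpha> + norm (transpose Cb ** Cb) * B"
  have "D t \<bullet> D t = 0"
  proof (rule gronwall_vanishing[where \<phi>="\<lambda>s. D s \<bullet> D s" and T=t])
    show "((\<lambda>s. D s \<bullet> D s) has_real_derivative 2 * (D s \<bullet> D' s)) (at s within {0..})" if "0 \<le> s" for s
    proof -
      have "(D has_vector_derivative D' s) (at s within {0..})"
        unfolding D_def[abs_def] D'_def
        by (intro has_vector_derivative_diff has_derivative_P[OF that]
            bounded_linear.has_vector_derivative[OF bounded_linear_transpose])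
      from bounded_bilinear.has_vector_derivative[OF bounded_bilinear_inner this this]
      show ?thesis by (simp add: has_real_derivative_iff_has_vector_derivative inner_commute)
    qed
    show "D 0 \<bullet> D 0 = 0" using P0_pd P_init by (simp add: D_def pos_def_mat_def)
    show "2 * (D s \<bullet> D' s) \<le> (4 * k) * (D s \<bullet> D s)" if "0 \<le> s" "s \<le> t" for s
    proof -
      have "2 * (D s \<bullet> D' s) \<le> 2 * (norm (D s) * norm (D' s))"
        using norm_cauchy_schwarz by simp
      also have "\<dots> \<le> 2 * (norm (D s) * (2 * k * norm (D s)))"
        using norm_riccati_antisymmetric_le[of s B] B[of s] that
        by (intro mult_left_mono) (auto simp: D_def D'_def k_def)
      also have "\<dots> = (4 * k) * (D s \<bullet> D s)"
        by (simp add: power2_norm_eq_inner[symmetric] power2_eq_square)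
      finally show ?thesis .
    qed
  qed (use t in auto)
  then show ?thesis by (simp add: D_def)
qed

lemma inner_P_symmetric: "0 \<le> t \<Longrightarrow> v \<bullet> (P t *v z) = (P t *v v) \<bullet> z"
  by (rule inner_matrix_vector_symmetric[OF P_symmetric])

lemma riccati_apply: "riccati t *v v = A t *v (P t *v v) + P t *v (transpose (A t) *v v) + \<Gamma> *v v
    - P t *v (transpose Cb *v (Cb *v (P t *v v)))"
  by (simp add: riccati_def matrix_vector_mul_assoc[symmetric] matrix_vector_mult_add_rdistrib
      matrix_vector_mult_diff_rdistrib)

lemma inner_riccati:
  assumes t: "0 \<le> t" and Pz: "P t *v z = v"
  shows "z \<bullet> (riccati t *v z) = 2 * (z \<bullet> (A t *v v)) + z \<bullet> (\<Gamma> *v z) - (norm (Cb *v v))\<^sup>2"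
proof -
  have "z \<bullet> (P t *v (transpose (A t) *v z)) = z \<bullet> (A t *v v)"
    using inner_P_symmetric[OF t, of z] Pz inner_matrix_vector_transpose[of v "transpose (A t)" z]
    by (simp add: inner_commute)
  moreover have "z \<bullet> (P t *v (transpose Cb *v (Cb *v v))) = (norm (Cb *v v))\<^sup>2"
    using inner_P_symmetric[OF t, of z] Pz inner_matrix_vector_transpose[of v "transpose Cb"]
    by (simp add: power2_norm_eq_inner)
  ultimately show ?thesis unfolding riccati_apply Pz by (simp add: inner_add_right inner_diff_right)
qed

lemma riccati_pos_on_lower_kernel:
  assumes s: "0 \<le> s" and v: "v \<noteq> 0" and Pv: "P s *v v = \<delta> *\<^sub>R v"
  shows "0 < v \<bullet> (riccati s *v v)"
proof -
  have "v \<bullet> (riccati s *v v) = 2 * \<delta> * (v \<bullet> (A s *v v)) + v \<bullet> (\<Gamma> *v v) - \<delta> * \<delta> * (norm (Cb *v v))\<^sup>2"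
    using inner_riccati[OF s, of "(1 / \<delta>) *\<^sub>R v" v] Pv \<delta>(1)
    by (simp add: matrix_vector_mult_scaleR inner_commute field_simps power2_eq_square)
  moreover have "2 * \<delta> * (- (\<alpha> * (norm v)\<^sup>2)) \<le> 2 * \<delta> * (v \<bullet> (A s *v v))"
    using abs_inner_A[OF s, of v] \<delta>(1) by (intro mult_left_mono) auto
  moreover have "\<delta> * \<delta> * (norm (Cb *v v))\<^sup>2 \<le> \<delta> * (\<beta> * (norm v)\<^sup>2)"
  proof -
    have "(norm (Cb *v v))\<^sup>2 \<le> \<beta> * (norm v)\<^sup>2"
      using power_mono[OF norm_matrix_vector_mult_le[of Cb v]] by (simp add: \<beta>_def power_mult_distrib)
    then have "\<delta> * \<delta> * (norm (Cb *v v))\<^sup>2 \<le> \<delta> * \<delta> * (\<beta> * (norm v)\<^sup>2)"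
      using \<delta>(1) by (intro mult_left_mono) auto
    also have "\<dots> \<le> \<delta> * (\<beta> * (norm v)\<^sup>2)"
      using \<delta>(1,3) \<beta>_nonneg by (intro mult_right_mono) auto
    finally show ?thesis .
  qed
  moreover have "\<gamma> * (norm v)\<^sup>2 \<le> v \<bullet> (\<Gamma> *v v)" by (rule \<gamma>(2))
  moreover have "\<delta> * (2 * \<alpha> + \<beta>) * (norm v)\<^sup>2 < \<gamma> / 2 * (norm v)\<^sup>2"
    using v by (intro mult_strict_right_mono \<delta>(4)) simp
  moreover have "0 < \<gamma> / 2 * (norm v)\<^sup>2" using \<gamma>(1) v by simp
  ultimately show ?thesis by (simp add: algebra_simps)
qed

lemma P_lower: "0 \<le> t \<Longrightarrow> \<delta> * (norm w)\<^sup>2 \<le> w \<bullet> (P t *v w)"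
proof -
  assume t: "0 \<le> t"
  define R where "R s = P s - \<delta> *\<^sub>R mat 1" for s
  have R_apply: "R s *v v = P s *v v - \<delta> *\<^sub>R v" for s v
    by (simp add: R_def matrix_vector_mult_diff_rdistrib scaleR_matrix_vector_assoc[symmetric])
  have "0 \<le> w \<bullet> (R t *v w)"
  proof (rule psd_persists[where R'=riccati, OF _ _ _ _ t])
    show "(R has_vector_derivative riccati s) (at s within {0..})" if "0 \<le> s" for s
      using has_vector_derivative_diff[OF has_derivative_P[OF that] has_vector_derivative_const]
      by (simp add: R_def[abs_def])
    show "transpose (R s) = R s" if "0 \<le> s" for s
      using P_symmetric[OF that] by (simp add: R_def transpose_diff transpose_scalar)
    show "0 < v \<bullet> (R 0 *v v)" if "v \<noteq> 0" for v
    proof -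
      have "\<delta> * (norm v)\<^sup>2 < p0 * (norm v)\<^sup>2" using that \<delta>(1,2) p0(1) by simp
      then show ?thesis
        using p0(2)[of v] by (simp add: R_apply P_init inner_diff_right power2_norm_eq_inner)
    qed
    show "0 < v \<bullet> (riccati s *v v)" if "0 \<le> s" "v \<noteq> 0" "R s *v v = 0" for s v
      using riccati_pos_on_lower_kernel that by (simp add: R_apply)
  qed
  then show ?thesis by (simp add: R_apply inner_diff_right power2_norm_eq_inner)
qed

definition "Q t = matrix_inv (P t)"
definition "Q' t = - (Q t ** riccati t ** Q t)"

lemma Q_inverse: "0 \<le> t \<Longrightarrow> Q t ** P t = mat 1 \<and> P t ** Q t = mat 1"
proof -
  assume t: "0 \<le> t"
  have "P t *v w = 0 \<Longrightarrow> w = 0" for w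
    using P_lower[OF t, of w] \<delta>(1) by (simp add: mult_le_0_iff)
  then have "invertible (P t)"
    by (simp add: matrix_left_invertible_ker invertible_left_inverse)
  then have "\<exists>B. P t ** B = mat 1 \<and> B ** P t = mat 1" by (simp add: invertible_def)
  then show ?thesis unfolding Q_def matrix_inv_def by (metis (mono_tags, lifting) someI_ex)
qed

lemma P_Q_apply: "0 \<le> t \<Longrightarrow> P t *v (Q t *v w) = w"
  using Q_inverse by (simp add: matrix_vector_mul_assoc)

lemma Q_symmetric: "0 \<le> t \<Longrightarrow> transpose (Q t) = Q t"
proof -
  assume t: "0 \<le> t"
  have QP: "transpose (Q t) ** P t = mat 1"
    using Q_inverse[OF t] P_symmetric[OF t] by (metis matrix_transpose_mul transpose_mat)
  have "transpose (Q t) = transpose (Q t) ** (P t ** Q t)" using Q_inverse[OF t] by simp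
  also have "\<dots> = Q t" using QP by (simp add: matrix_mul_assoc)
  finally show ?thesis .
qed

lemma inner_Q_symmetric: "0 \<le> t \<Longrightarrow> v \<bullet> (Q t *v z) = (Q t *v v) \<bullet> z"
  by (rule inner_matrix_vector_symmetric[OF Q_symmetric])

lemma norm_Q_apply: "0 \<le> t \<Longrightarrow> norm (Q t *v w) \<le> (1 / \<delta>) * norm w"
proof -
  assume t: "0 \<le> t"
  define z where "z = Q t *v w"
  have "\<delta> * (norm z)\<^sup>2 \<le> z \<bullet> (P t *v z)" by (rule P_lower[OF t])
  also have "\<dots> \<le> norm z * norm w" unfolding z_def P_Q_apply[OF t] by (rule norm_cauchy_schwarz)
  finally have "\<delta> * norm z \<le> norm w"
    by (cases "z = 0") (auto simp: power2_eq_square mult.assoc)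
  then show ?thesis using \<delta>(1) by (simp add: z_def field_simps)
qed

lemma inner_Q_le: "0 \<le> t \<Longrightarrow> w \<bullet> (Q t *v w) \<le> (norm w)\<^sup>2 / \<delta>"
proof -
  assume t: "0 \<le> t"
  have "w \<bullet> (Q t *v w) \<le> norm w * norm (Q t *v w)" by (rule norm_cauchy_schwarz)
  also have "\<dots> \<le> norm w * ((1 / \<delta>) * norm w)" by (intro mult_left_mono norm_Q_apply[OF t]) simp
  finally show ?thesis by (simp add: power2_eq_square)
qed

lemma has_derivative_Q: "0 \<le> t \<Longrightarrow> (Q has_vector_derivative Q' t) (at t within {0..})"
  unfolding Q'_def
  by (rule has_vector_derivative_matrix_inverse[OF has_derivative_P])
    (use Q_inverse norm_matrix_le_of_bound[OF norm_Q_apply] in auto)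

lemma Q_init_above: "v \<noteq> 0 \<Longrightarrow> v \<bullet> ((\<sigma> *\<^sub>R lyap.S) *v v) < v \<bullet> (Q 0 *v v)"
proof -
  assume v: "v \<noteq> 0"
  define z where "z = Q 0 *v v"
  have Pz: "P0 *v z = v" using P_Q_apply[of 0 v] by (simp add: z_def P_init)
  have "p0 * (norm z)\<^sup>2 \<le> v \<bullet> (Q 0 *v v)"
    using p0(2)[of z] Pz by (simp add: z_def inner_commute)
  moreover have nv: "(norm v)\<^sup>2 \<le> (norm P0 + 1)\<^sup>2 * (norm z)\<^sup>2"
  proof -
    have "norm v \<le> norm P0 * norm z" using norm_matrix_vector_mult_le[of P0 z] Pz by simp
    also have "\<dots> \<le> (norm P0 + 1) * norm z" by (intro mult_right_mono) auto
    finally have "(norm v)\<^sup>2 \<le> ((norm P0 + 1) * norm z)\<^sup>2" by (rule power_mono) simp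
    then show ?thesis by (simp add: power_mult_distrib)
  qed
  moreover have "v \<bullet> ((\<sigma> *\<^sub>R lyap.S) *v v) \<le> \<sigma> * (norm lyap.S + 1) * (norm v)\<^sup>2"
  proof -
    have "v \<bullet> ((\<sigma> *\<^sub>R lyap.S) *v v) = \<sigma> * (v \<bullet> (lyap.S *v v))"
      by (simp add: scaleR_matrix_vector_assoc[symmetric])
    also have "\<dots> \<le> \<sigma> * (norm lyap.S * (norm v)\<^sup>2)"
      using abs_inner_matrix_vector_le[of v lyap.S] \<sigma>(1) by (intro mult_left_mono) auto
    also have "\<dots> \<le> \<sigma> * (norm lyap.S + 1) * (norm v)\<^sup>2"
      using \<sigma>(1) by (simp add: mult_right_mono mult_left_mono algebra_simps)
    finally show ?thesis .
  qed
  moreover have "\<sigma> * (norm lyap.S + 1) * (norm v)\<^sup>2 < p0 * (norm z)\<^sup>2"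
  proof -
    have "z \<noteq> 0" using v Pz by auto
    have "\<sigma> * (norm lyap.S + 1) * (norm v)\<^sup>2 \<le> \<sigma> * (norm lyap.S + 1) * ((norm P0 + 1)\<^sup>2 * (norm z)\<^sup>2)"
      using nv \<sigma>(1) by (intro mult_left_mono) auto
    also have "\<dots> = (\<sigma> * (norm lyap.S + 1) * (norm P0 + 1)\<^sup>2) * (norm z)\<^sup>2" by (simp add: mult_ac)
    also have "\<dots> < p0 * (norm z)\<^sup>2"
      using \<open>z \<noteq> 0\<close> by (intro mult_strict_right_mono \<sigma>(4)) simp
    finally show ?thesis .
  qed
  ultimately show ?thesis by linarith
qed

text \<open>On the kernel of Q - \<sigma> S the derivative of Q is positive by the dissipation inequality of S.\<close>
lemma Q'_pos_on_lower_kernel: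
  assumes s: "0 \<le> s" and v: "v \<noteq> 0" and Qv: "Q s *v v = (\<sigma> *\<^sub>R lyap.S) *v v"
  shows "0 < v \<bullet> (Q' s *v v)"
proof -
  define z where "z = Q s *v v"
  have z: "z = \<sigma> *\<^sub>R (lyap.S *v v)" using Qv by (simp add: z_def scaleR_matrix_vector_assoc)
  have "v \<bullet> (Q' s *v v) = - (z \<bullet> (riccati s *v z))"
    using inner_Q_symmetric[OF s, of v "riccati s *v z"]
    by (simp add: Q'_def matrix_vector_mult_minus_left matrix_vector_mul_assoc[symmetric] z_def)
  also have "\<dots> = (norm (Cb *v v))\<^sup>2 - 2 * (z \<bullet> (A s *v v)) - z \<bullet> (\<Gamma> *v z)"
    using inner_riccati[OF s, of z v] P_Q_apply[OF s] by (simp add: z_def)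
  finally have Q'v: "v \<bullet> (Q' s *v v) = (norm (Cb *v v))\<^sup>2 - 2 * (z \<bullet> (A s *v v)) - z \<bullet> (\<Gamma> *v z)" .
  have "z \<bullet> (A s *v v) = \<sigma> * (v \<bullet> (lyap.S *v (Ab *v v + D1 (xh s, u s) (v, 0))))"
    using inner_matrix_vector_symmetric[OF lyap.S_symmetric, of v "A s *v v"]
    by (simp add: z A_apply[OF s])
  also have "\<dots> \<le> \<sigma> * (lyap.c 0 * (norm (Cb *v v))\<^sup>2 - (norm v)\<^sup>2 / 2)"
    using mult_left_mono[OF lyap.S_dissipation[OF D1_sub_dist_bound[OF u_in_U[OF s]]], of \<sigma>] \<sigma>(1)
    by simp
  finally have zA: "2 * (z \<bullet> (A s *v v)) \<le> 2 * \<sigma> * lyap.c 0 * (norm (Cb *v v))\<^sup>2 - \<sigma> * (norm v)\<^sup>2"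
    by (simp add: algebra_simps)
  have "z \<bullet> (\<Gamma> *v z) \<le> norm \<Gamma> * (\<sigma> * (norm lyap.S * norm v))\<^sup>2"
  proof -
    have "norm z \<le> \<sigma> * (norm lyap.S * norm v)"
      using norm_matrix_vector_mult_le[of lyap.S v] \<sigma>(1) by (simp add: z mult_left_mono)
    then have "norm \<Gamma> * (norm z)\<^sup>2 \<le> norm \<Gamma> * (\<sigma> * (norm lyap.S * norm v))\<^sup>2"
      by (intro mult_left_mono power_mono) auto
    moreover have "z \<bullet> (\<Gamma> *v z) \<le> norm \<Gamma> * (norm z)\<^sup>2"
      using abs_inner_matrix_vector_le[of z \<Gamma>] by simp
    ultimately show ?thesis by linarith
  qed
  also have "\<dots> = \<sigma> * (\<sigma> * (norm \<Gamma> * (norm lyap.S)\<^sup>2)) * (norm v)\<^sup>2"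
    by (simp add: power_mult_distrib power2_eq_square algebra_simps)
  also have "\<dots> < \<sigma> * 1 * (norm v)\<^sup>2"
    using \<sigma>(1,3) v by (intro mult_strict_right_mono mult_strict_left_mono) auto
  finally have "z \<bullet> (\<Gamma> *v z) < \<sigma> * (norm v)\<^sup>2" by simp
  moreover have "0 \<le> (1 - 2 * \<sigma> * lyap.c 0) * (norm (Cb *v v))\<^sup>2" using \<sigma>(2) by simp
  ultimately show ?thesis unfolding Q'v using zA by (simp add: algebra_simps)
qed

lemma Q_lower: "0 \<le> t \<Longrightarrow> \<mu> * (norm w)\<^sup>2 \<le> w \<bullet> (Q t *v w)"
proof -
  assume t: "0 \<le> t"
  define R where "R s = Q s - \<sigma> *\<^sub>R lyap.S" for s
  have R_apply: "R s *v v = Q s *v v - (\<sigma> *\<^sub>R lyap.S) *v v" for s v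
    by (simp add: R_def matrix_vector_mult_diff_rdistrib)
  have "0 \<le> w \<bullet> (R t *v w)"
  proof (rule psd_persists[where R'=Q', OF _ _ _ _ t])
    show "(R has_vector_derivative Q' s) (at s within {0..})" if "0 \<le> s" for s
      using has_vector_derivative_diff[OF has_derivative_Q[OF that] has_vector_derivative_const]
      by (simp add: R_def[abs_def])
    show "transpose (R s) = R s" if "0 \<le> s" for s
      using Q_symmetric[OF that] lyap.S_symmetric by (simp add: R_def transpose_diff transpose_scalar)
    show "0 < v \<bullet> (R 0 *v v)" if "v \<noteq> 0" for v
      using Q_init_above[OF that] by (simp add: R_apply inner_diff_right)
    show "0 < v \<bullet> (Q' s *v v)" if "0 \<le> s" "v \<noteq> 0" "R s *v v = 0" for s v
      using Q'_pos_on_lower_kernel that by (simp add: R_apply)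
  qed
  then show ?thesis using \<sigma>S_lower[of w] by (simp add: R_apply inner_diff_right)
qed

definition "e t = x t - xh t"
definition "r t = fb (x t) (u t) - fb (xh t) (u t) - D1 (xh t, u t) (e t, 0)"
definition "e' t = A t *v e t + r t - P t *v (transpose Cb *v (Cb *v e t))"
definition "V t = e t \<bullet> (Q t *v e t)"
definition "V' t = e t \<bullet> (Q t *v e' t + Q' t *v e t) + e' t \<bullet> (Q t *v e t)"

lemma norm_r: "0 \<le> t \<Longrightarrow> norm (r t) \<le> (L + 1) * (norm (e t))\<^sup>2"
proof -
  assume t: "0 \<le> t"
  have "norm (r t) \<le> L * (norm (e t))\<^sup>2"
    unfolding r_def e_def
    by (rule linearization_error_le[OF fb_C2 u_in_U[OF t] fb_second_bound[OF u_in_U[OF t]]])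
  also have "\<dots> \<le> (L + 1) * (norm (e t))\<^sup>2" by (simp add: mult_right_mono)
  finally show ?thesis .
qed

lemma has_derivative_e: "0 \<le> t \<Longrightarrow> (e has_vector_derivative e' t) (at t within {0..})"
proof -
  assume t: "0 \<le> t"
  have "y t - h (xh t) (u t) = Cb *v e t"
    using y_eq t by (simp add: h_form e_def matrix_vector_mult_diff_distrib)
  moreover have "f (x t) (u t) - f (xh t) (u t) = A t *v e t + r t"
  proof -
    have "Ab *v x t - Ab *v xh t = Ab *v e t" by (simp add: e_def matrix_vector_mult_diff_distrib)
    then show ?thesis unfolding f_form A_apply[OF t] r_def by (simp add: algebra_simps)
  qed
  ultimately have "f (x t) (u t) - (f (xh t) (u t) + (P t ** transpose (matrix (frechet_derivative
      (\<lambda>\<xi>. h \<xi> (u t)) (at (xh t))))) *v (y t - h (xh t) (u t))) = e' t"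
    by (simp add: Jacobian_h e'_def matrix_vector_mul_assoc[symmetric] algebra_simps)
  moreover have "((\<lambda>s. x s - xh s) has_vector_derivative f (x t) (u t) - (f (xh t) (u t)
      + (P t ** transpose (matrix (frechet_derivative (\<lambda>\<xi>. h \<xi> (u t)) (at (xh t)))))
        *v (y t - h (xh t) (u t)))) (at t within {0..})"
    using x_deriv xh_deriv t by (intro has_vector_derivative_diff) auto
  ultimately show ?thesis by (simp add: e_def[abs_def])
qed

lemma has_derivative_V: "0 \<le> t \<Longrightarrow> (V has_real_derivative V' t) (at t within {0..})"
proof -
  assume t: "0 \<le> t"
  have "((\<lambda>s. Q s *v e s) has_vector_derivative (Q t *v e' t + Q' t *v e t)) (at t within {0..})"
    by (rule bounded_bilinear.has_vector_derivative[OF bounded_bilinear_matrix_vector_mult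
          has_derivative_Q[OF t] has_derivative_e[OF t]])
  from bounded_bilinear.has_vector_derivative[OF bounded_bilinear_inner has_derivative_e[OF t] this]
  show ?thesis unfolding has_real_derivative_iff_has_vector_derivative V_def[abs_def] V'_def .
qed

text \<open>The terms with A cancel between the derivatives of Q and of e.\<close>
lemma V'_eq: "0 \<le> t \<Longrightarrow>
  V' t = 2 * ((Q t *v e t) \<bullet> r t) - (norm (Cb *v e t))\<^sup>2 - (Q t *v e t) \<bullet> (\<Gamma> *v (Q t *v e t))"
proof -
  assume t: "0 \<le> t"
  define w where "w = Q t *v e t"
  have Pw: "P t *v w = e t" by (simp add: w_def P_Q_apply[OF t])
  have "e t \<bullet> (Q' t *v e t) = - (w \<bullet> (riccati t *v w))"
    by (simp add: Q'_def matrix_vector_mult_minus_left matrix_vector_mul_assoc[symmetric] w_def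
        inner_Q_symmetric[OF t])
  also have "\<dots> = - (2 * (w \<bullet> (A t *v e t)) + w \<bullet> (\<Gamma> *v w) - (norm (Cb *v e t))\<^sup>2)"
    by (simp add: inner_riccati[OF t Pw])
  finally have Q': "e t \<bullet> (Q' t *v e t) = \<dots>" .
  have "w \<bullet> (P t *v (transpose Cb *v (Cb *v e t))) = (norm (Cb *v e t))\<^sup>2"
    using inner_P_symmetric[OF t, of w] Pw inner_matrix_vector_transpose[of "e t" "transpose Cb"]
    by (simp add: power2_norm_eq_inner)
  then have "w \<bullet> e' t = w \<bullet> (A t *v e t) + w \<bullet> r t - (norm (Cb *v e t))\<^sup>2"
    by (simp add: e'_def inner_add_right inner_diff_right)
  moreover have "e t \<bullet> (Q t *v e' t) = w \<bullet> e' t" by (simp add: w_def inner_Q_symmetric[OF t])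
  moreover have "e' t \<bullet> (Q t *v e t) = w \<bullet> e' t" by (simp add: w_def inner_commute)
  ultimately show ?thesis unfolding V'_def inner_add_right Q' by (simp add: w_def algebra_simps)
qed

lemma V_lower: "0 \<le> t \<Longrightarrow> \<mu> * (norm (e t))\<^sup>2 \<le> V t"
  unfolding V_def by (rule Q_lower)

lemma V_upper: "0 \<le> t \<Longrightarrow> V t \<le> (norm (e t))\<^sup>2 / \<delta>"
  unfolding V_def by (rule inner_Q_le)

lemma norm_e_le_\<rho>: "0 \<le> t \<Longrightarrow> V t \<le> \<mu> * \<rho>\<^sup>2 \<Longrightarrow> norm (e t) \<le> \<rho>"
proof -
  assume "0 \<le> t" "V t \<le> \<mu> * \<rho>\<^sup>2"
  then have "\<mu> * (norm (e t))\<^sup>2 \<le> \<mu> * \<rho>\<^sup>2" using V_lower by (meson order_trans)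
  then have "(norm (e t))\<^sup>2 \<le> \<rho>\<^sup>2" using \<mu>_pos by simp
  then show ?thesis using \<rho>_pos by (simp add: power2_le_iff_abs_le)
qed

lemma V_le_norm_mult: "V t \<le> norm (e t) * norm (Q t *v e t)"
  unfolding V_def by (rule norm_cauchy_schwarz)

lemma \<mu>_norm_e_le: "0 \<le> t \<Longrightarrow> \<mu> * norm (e t) \<le> norm (Q t *v e t)"
proof (cases "e t = 0")
  case False
  assume "0 \<le> t"
  then have "\<mu> * norm (e t) * norm (e t) \<le> norm (Q t *v e t) * norm (e t)"
    using V_lower[of t] V_le_norm_mult[of t] by (simp add: power2_eq_square mult_ac)
  then show ?thesis using False by simp
qed simp

lemma V'_le: "0 \<le> t \<Longrightarrow>
  V' t \<le> 2 * (norm (Q t *v e t) * ((L + 1) * (norm (e t))\<^sup>2)) - \<gamma> * (norm (Q t *v e t))\<^sup>2"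
proof -
  assume t: "0 \<le> t"
  have "(Q t *v e t) \<bullet> r t \<le> norm (Q t *v e t) * norm (r t)" by (rule norm_cauchy_schwarz)
  also have "\<dots> \<le> norm (Q t *v e t) * ((L + 1) * (norm (e t))\<^sup>2)"
    by (intro mult_left_mono norm_r[OF t]) simp
  finally have "(Q t *v e t) \<bullet> r t \<le> \<dots>" .
  moreover have "\<gamma> * (norm (Q t *v e t))\<^sup>2 \<le> (Q t *v e t) \<bullet> (\<Gamma> *v (Q t *v e t))" by (rule \<gamma>(2))
  moreover have "0 \<le> (norm (Cb *v e t))\<^sup>2" by simp
  ultimately show ?thesis unfolding V'_eq[OF t] by linarith
qed

text \<open>Once the error is at most \<rho>, the quadratic remainder is dominated by the noise term.\<close>
lemma V'_decay: "0 \<le> t \<Longrightarrow> V t \<le> \<mu> * \<rho>\<^sup>2 \<Longrightarrow> V' t \<le> - \<kappa> * V t"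
proof -
  assume t: "0 \<le> t" and V: "V t \<le> \<mu> * \<rho>\<^sup>2"
  define E where "E = norm (e t)"
  define W where "W = norm (Q t *v e t)"
  have E: "0 \<le> E" "E \<le> \<rho>" "\<mu> * E \<le> W"
    using norm_e_le_\<rho>[OF t V] \<mu>_norm_e_le[OF t] by (simp_all add: E_def W_def)
  have "2 * (W * ((L + 1) * E\<^sup>2)) = 2 * (L + 1) * W * E * E"
    by (simp add: power2_eq_square mult_ac)
  also have "\<dots> \<le> 2 * (L + 1) * W * \<rho> * (W / \<mu>)"
    using E \<mu>_pos L_nonneg by (intro mult_mono mult_left_mono) (auto simp: W_def field_simps)
  also have "\<dots> = 2 * ((L + 1) * \<rho>) * W * W / \<mu>" by simp
  also have "(L + 1) * \<rho> = \<gamma> * \<mu> / 4"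
  proof -
    have "L + 1 \<noteq> 0" using L_nonneg by simp
    then show ?thesis unfolding \<rho>_def by (simp add: divide_simps)
  qed
  also have "2 * (\<gamma> * \<mu> / 4) * W * W / \<mu> = (\<gamma> / 2) * W\<^sup>2"
    using \<mu>_pos by (simp add: power2_eq_square)
  finally have "V' t \<le> - (\<gamma> / 2) * W\<^sup>2" using V'_le[OF t] unfolding E_def W_def by simp
  also have "\<dots> \<le> - \<kappa> * V t"
  proof -
    have "\<mu> * V t \<le> \<mu> * (E * W)" using V_le_norm_mult[of t] \<mu>_pos by (simp add: E_def W_def)
    also have "\<dots> \<le> W * W" using mult_right_mono[OF E(3), of W] by (simp add: W_def mult_ac)
    finally have "(\<gamma> / 2) * (\<mu> * V t) \<le> (\<gamma> / 2) * W\<^sup>2" using \<gamma>(1) by (simp add: power2_eq_square)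
    then show ?thesis by (simp add: \<kappa>_def mult_ac)
  qed
  finally show ?thesis .
qed

lemma V_nonneg: "0 \<le> t \<Longrightarrow> 0 \<le> V t"
  using V_lower \<mu>_pos by (meson mult_nonneg_nonneg order_trans less_imp_le zero_le_power2)

lemma V_exponential_bound: "0 \<le> t \<Longrightarrow> V t \<le> V 0 * exp (- \<kappa> * t)"
proof -
  assume t: "0 \<le> t"
  define W where "W s = V s * exp (\<kappa> * s)" for s
  have W_deriv: "(W has_real_derivative V' s * exp (\<kappa> * s) + (exp (\<kappa> * s) * \<kappa>) * V s)
      (at s within {0..})" if "0 \<le> s" for s
    unfolding W_def by (auto intro!: derivative_eq_intros has_derivative_V[OF that])
  have "V 0 \<le> (norm (e 0))\<^sup>2 / \<delta>" by (rule V_upper) simp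
  also have "\<dots> < \<epsilon>\<^sup>2 / \<delta>"
    using error_init \<delta>(1) by (simp add: e_def divide_strict_right_mono power_strict_mono)
  also have "\<epsilon>\<^sup>2 / \<delta> = \<mu> * \<rho>\<^sup>2" using \<delta>(1) \<mu>_pos by (simp add: \<epsilon>_def power_mult_distrib)
  finally have V0: "V 0 < \<mu> * \<rho>\<^sup>2" .
  \<comment> \<open>V e^(\<kappa> t) cannot increase while it stays below \<mu> \<rho>^2, hence never leaves that level\<close>
  have "W t \<le> W 0"
  proof (rule decreasing_while_below_level[OF W_deriv, where B="\<mu> * \<rho>\<^sup>2"])
    show "W 0 < \<mu> * \<rho>\<^sup>2" using V0 by (simp add: W_def)
    show "V' s * exp (\<kappa> * s) + (exp (\<kappa> * s) * \<kappa>) * V s \<le> 0"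
      if s: "0 \<le> s" and "W s \<le> \<mu> * \<rho>\<^sup>2" for s
    proof -
      have "V s * 1 \<le> W s"
        unfolding W_def using V_nonneg[OF s] \<kappa>_pos s by (intro mult_left_mono) auto
      then have "V' s \<le> - \<kappa> * V s" using that by (intro V'_decay[OF s]) simp
      then have "(V' s + \<kappa> * V s) * exp (\<kappa> * s) \<le> 0" by (simp add: mult_le_0_iff)
      then show ?thesis by (simp add: algebra_simps)
    qed
  qed (use t in auto)
  then show ?thesis by (simp add: W_def field_simps exp_minus)
qed

lemma error_exponential_decay: "\<exists>M \<alpha>. \<alpha> > 0 \<and> (\<forall>t\<ge>0. norm (x t - xh t) \<le> M * exp (- \<alpha> * t))"
proof (intro exI conjI allI impI)
  show "0 < \<kappa> / 2" using \<kappa>_pos by simp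
  fix t :: real assume t: "0 \<le> t"
  have "\<mu> * (norm (e t))\<^sup>2 \<le> V 0 * exp (- \<kappa> * t)"
    using V_lower[OF t] V_exponential_bound[OF t] by linarith
  then have "(norm (e t))\<^sup>2 \<le> (sqrt (V 0 / \<mu>) * exp (- (\<kappa> / 2) * t))\<^sup>2"
    using \<mu>_pos V_nonneg[of 0]
    by (simp add: field_simps power_mult_distrib power2_eq_square exp_add[symmetric])
  then show "norm (x t - xh t) \<le> sqrt (V 0 / \<mu>) * exp (- (\<kappa> / 2) * t)"
    using \<mu>_pos V_nonneg[of 0] by (simp add: e_def power2_le_iff_abs_le)
qed

end

theorem mainTheorem1:
  fixes l :: "'p::{finite,linorder} \<Rightarrow> nat"
    and blk :: "'n::finite \<Rightarrow> 'p" and pos :: "'n \<Rightarrow> nat"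
    and U :: "(real^'m::finite) set" and u :: "real \<Rightarrow> real^'m"
    and fb :: "real^'n \<Rightarrow> real^'m \<Rightarrow> real^'n" and hb :: "real^'m \<Rightarrow> (real, 'p) vec"
    and f :: "real^'n \<Rightarrow> real^'m \<Rightarrow> real^'n" and h :: "real^'n \<Rightarrow> real^'m \<Rightarrow> (real, 'p) vec"
    and D1 :: "(real^'n) \<times> (real^'m) \<Rightarrow> ((real^'n) \<times> (real^'m)) \<Rightarrow>\<^sub>L (real^'n)"
    and D2 :: "(real^'n) \<times> (real^'m) \<Rightarrow> ((real^'n) \<times> (real^'m)) \<Rightarrow>\<^sub>L ((real^'n) \<times> (real^'m)) \<Rightarrow>\<^sub>L (real^'n)"
    and L :: real and G P0 :: "real^'n^'n"
  assumes coords: "obs_coords l blk pos"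
    and f_form: "\<And>x v. f x v = Abar blk pos *v x + fb x v"
    and h_form: "\<And>x v. h x v = Cbar blk pos *v x + hb v"
    and fb_triangular: "\<And>x \<xi> v k. v \<in> U \<Longrightarrow> (\<forall>k'. pos k' \<le> pos k \<longrightarrow> x $ k' = \<xi> $ k')
                          \<Longrightarrow> fb x v $ k = fb \<xi> v $ k"
    and fb_lipschitz: "\<And>x \<xi> v k. v \<in> U \<Longrightarrow>
                          \<bar>fb x v $ k - fb \<xi> v $ k\<bar> \<le> L * sub_dist pos (pos k) x \<xi>"
    and fb_C2: "has_C2_derivs (UNIV \<times> U) (\<lambda>z. fb (fst z) (snd z)) D1 D2"
    and hb_C2: "C2_on U hb"
    and fb_second_bound: "\<And>x \<xi> v. v \<in> U \<Longrightarrow>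
                          norm (D2 (x, v) (\<xi>, 0) (\<xi>, 0)) \<le> L * (norm \<xi>)\<^sup>2"
    and u_in_U: "\<And>t. t \<ge> 0 \<Longrightarrow> u t \<in> U"
    and G_inv: "invertible G"
    and P0_pd: "pos_def_mat P0"
  shows "\<exists>\<epsilon>>0. \<forall>x y xh P.
           (\<forall>t\<ge>0. (x has_vector_derivative f (x t) (u t)) (at t within {0..})) \<and>
           (\<forall>t\<ge>0. y t = h (x t) (u t)) \<and>
           (\<forall>t\<ge>0. (xh has_vector_derivative
                       (f (xh t) (u t) + (P t ** transpose (matrix (frechet_derivative (\<lambda>\<xi>. h \<xi> (u t)) (at (xh t)))))
                                          *v (y t - h (xh t) (u t))))
                     (at t within {0..})) \<and>
           (\<forall>t\<ge>0. (P has_vector_derivative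
                       (let A = matrix (frechet_derivative (\<lambda>\<xi>. f \<xi> (u t)) (at (xh t)));
                            C = matrix (frechet_derivative (\<lambda>\<xi>. h \<xi> (u t)) (at (xh t)))
                        in A ** P t + P t ** transpose A + G ** transpose G
                           - P t ** transpose C ** C ** P t))
                     (at t within {0..})) \<and>
           P 0 = P0 \<and> norm (x 0 - xh 0) < \<epsilon>
           \<longrightarrow> (\<exists>M \<alpha>. \<alpha> > 0 \<and> (\<forall>t\<ge>0. norm (x t - xh t) \<le> M * exp (- \<alpha> * t)))"
proof -
  interpret ekf_system l blk pos U u fb hb f h D1 D2 L G P0
    by unfold_locales (fact coords f_form h_form fb_lipschitz fb_C2 fb_second_bound u_in_U G_inv P0_pd)+
  show ?thesis
  proof (rule exI[of _ \<epsilon>], intro conjI \<epsilon>_pos allI impI, goal_cases)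
    case (1 x y xh P)
    then interpret ekf_trajectory l blk pos U u fb hb f h D1 D2 L G P0 x y xh P
      by unfold_locales auto
    show ?case by (rule error_exponential_decay)
  qed
qed

end
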